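(* Let $(\mathcal{A},\mathcal{B},\mathcal{C})$ be a recollement of extriangulated categories (with functors $i^*,i_*,i^!,j_!,j^*,j_*$ as in the context) and let $C\in\mathcal{C}$. Then $$\operatorname{pd}_{\mathcal{B}}j_!(C)\le\operatorname{pd}_{\mathcal{C}}C+\operatorname{gl}_{\mathcal{A}}\mathcal{B}+1,$$ where $\operatorname{gl}_{\mathcal{A}}\mathcal{B}:=\sup\{\operatorname{pd}_{\mathcal{B}}i_*(A)\mid A\in\mathcal{A}\}$ (with the convention $n+\infty=\infty$).
   Context: Extriangulated categories $(\mathcal{C},\mathbb{E},\mathfrak{s})$ are in the sense of Nakaoka–Palu: $\mathcal{C}$ additive, $\mathbb{E}:\mathcal{C}^{op}\times\mathcal{C}\to\mathrm{Ab}$ biadditive, $\mathfrak{s}$ an additive realization sending $\delta\in\mathbb{E}(C,A)$ to a class of sequences $[A\xrightarrow{x}B\xrightarrow{y}C]$, satisfying (ET1)–(ET4), (ET3)$^{op}$, (ET4)$^{op}$. Such a sequence is an $\mathbb{E}$-triangle $A\xrightarrow{x}B\xrightarrow{y}C\overset{\delta}{\dashrightarrow}$; $x$ is an inflation, $y$ a deflation, $A=\mathrm{cocone}(y)$, $C=\mathrm{cone}(x)$. Standing assumptions: every extriangulated category is Krull–Schmidt, Hom-finite, $k$-linear, has enough projectives and injectives, and satisfies (WIC): if $gf$ is an inflation then $f$ is an inflation; if $gf$ is a deflation then $g$ is a deflation. Projective object $P$: for every $\mathbb{E}$-triangle $A\to B\xrightarrow{y}C\dashrightarrow$ and $c:P\to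 C$ there is $b$ with $yb=c$; $\mathcal{P}(\mathcal{C})$ is the class of projectives. A finite $\mathbb{E}$-triangle sequence $X_n\to\cdots\to X_0\to C$ means there are $\mathbb{E}$-triangles $K_{i+1}\xrightarrow{g_i}X_i\xrightarrow{f_i}K_i\dashrightarrow$ ($0\le i\le n-1$), $K_0=C$, $K_n=X_n$, with maps $f_0$, $g_{i-1}f_i$, $g_{n-1}$. $\operatorname{pd}_{\mathcal{C}}C$ is the least $n$ admitting such a sequence with all $X_i$ projective ($\infty$ if none); $\operatorname{gl}\mathcal{C}=\sup_C\operatorname{pd}_{\mathcal{C}}C$. A morphism $f$ is compatible if ($f$ is both an inflation and a deflation) implies $f$ is an isomorphism. A sequence $A\xrightarrow{f}B\xrightarrow{g}C$ is right exact if there is an $\mathbb{E}$-triangle $K\xrightarrow{h_2}B\xrightarrow{g}C\dashrightarrow$ and a compatible deflation $h_1:A\to K$ with $f=h_2h_1$ (left exact dually). A 4-term sequence $A\xrightarrow{f}B\xrightarrow{g}C\xrightarrow{h}D$ is right (resp. left) exact if there are $\mathbb{E}$-triangles $A\xrightarrow{f}B\xrightarrow{g_1}K\dashrightarrow$ and $K\xrightarrow{g_2}C\xrightarrow{h}D\dashrightarrow$ with $g=g_2g_1$ and $g_1$ (resp. $g_2$) compatible. An additive functor $F:\mathcal{A}\to\mathcal{B}$ between extriangulated categories is right exact if (1) it sends compatible morphisms to compatible morphisms; (2) it sends right exact sequences to right exact sequences (so for each $\mathbb{E}_{\mathcal{A}}$-triangle $A\xrightarrow{f}B\xrightarrow{g}C\overset{\delta}{\dashrightarrow}$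 there is an $\mathbb{E}_{\mathcal{B}}$-triangle $A'\xrightarrow{x}FB\xrightarrow{Fg}FC\dashrightarrow$ with $Ff=xy$, $y:FA\to A'$ a compatible deflation); (3) there is a natural transformation $\eta_{(C,A)}:\mathbb{E}_{\mathcal{A}}(C,A)\to\mathbb{E}_{\mathcal{B}}(FC,A')$ with $\mathfrak{s}_{\mathcal{B}}(\eta(\delta))=[A'\xrightarrow{x}FB\xrightarrow{Fg}FC]$. Left exact functors are defined dually. $F$ is exact if it preserves compatible morphisms and there is a natural transformation $\eta:\mathbb{E}_{\mathcal{A}}(-,-)\Rightarrow\mathbb{E}_{\mathcal{B}}(F-,F-)$ with $\mathfrak{s}_{\mathcal{B}}(\eta(\delta))=[FA\xrightarrow{Fx}FB\xrightarrow{Fy}FC]$ whenever $\mathfrak{s}_{\mathcal{A}}(\delta)=[A\xrightarrow{x}B\xrightarrow{y}C]$. A recollement $(\mathcal{A},\mathcal{B},\mathcal{C})$ of extriangulated categories consists of exact functors $i_*:\mathcal{A}\to\mathcal{B}$, $j^*:\mathcal{B}\to\mathcal{C}$, right exact functors $i^*:\mathcal{B}\to\mathcal{A}$, $j_!:\mathcal{C}\to\mathcal{B}$, and left exact functors $i^!:\mathcal{B}\to\mathcal{A}$, $j_*:\mathcal{C}\to\mathcal{B}$ such that: (R1) $(i^*,i_*,i^!)$ and $(j_!,j^*,j_* )$ are adjoint triples; (R2) the essential image of $i_*$ equals the kernel of $j^*$ (objects sent to $0$); (R3) $i_*,j_!,j_*$ are fully faithful; (R4) for each $B\in\mathcal{B}$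 there is a left exact 4-term $\mathbb{E}$-triangle sequence $i_*i^!(B)\xrightarrow{\theta_B}B\xrightarrow{\vartheta_B}j_*j^*(B)\to i_*(A)$ with $A\in\mathcal{A}$ and $\theta_B,\vartheta_B$ the adjunction morphisms; (R5) for each $B\in\mathcal{B}$ there is a right exact 4-term $\mathbb{E}$-triangle sequence $i_*(A')\to j_!j^*(B)\xrightarrow{\upsilon_B}B\xrightarrow{\nu_B}i_*i^*(B)$ with $A'\in\mathcal{A}$ and $\upsilon_B,\nu_B$ the adjunction morphisms. *)

theory Defs
  imports Main "HOL-Library.Extended_Nat"
begin

text \<open>Morphisms carry their (unique) source and target
  via pairwise disjoint hom-sets; likewise for the groups E(C,A).
  cmp g f is the composite g o f.  ext C A is E(C,A); epull c d is c^* d and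
  epush a d is a_* d.  realizes d A x B y C means [A -x-> B -y-> C] belongs to s(d).\<close>

record ('o,'a,'e,'k) extri =
  obj :: "'o set"
  hom :: "'o \<Rightarrow> 'o \<Rightarrow> 'a set"
  cmp :: "'a \<Rightarrow> 'a \<Rightarrow> 'a"
  idm :: "'o \<Rightarrow> 'a"
  madd :: "'a \<Rightarrow> 'a \<Rightarrow> 'a"
  mzero :: "'o \<Rightarrow> 'o \<Rightarrow> 'a"
  mneg :: "'a \<Rightarrow> 'a"
  smul :: "'k \<Rightarrow> 'a \<Rightarrow> 'a"
  ext :: "'o \<Rightarrow> 'o \<Rightarrow> 'e set"
  eadd :: "'e \<Rightarrow> 'e \<Rightarrow> 'e"
  ezero :: "'o \<Rightarrow> 'o \<Rightarrow> 'e"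
  eneg :: "'e \<Rightarrow> 'e"
  epull :: "'a \<Rightarrow> 'e \<Rightarrow> 'e"
  epush :: "'a \<Rightarrow> 'e \<Rightarrow> 'e"
  realizes :: "'e \<Rightarrow> 'o \<Rightarrow> 'a \<Rightarrow> 'o \<Rightarrow> 'a \<Rightarrow> 'o \<Rightarrow> bool"

definition abgrp :: "'x set \<Rightarrow> ('x \<Rightarrow> 'x \<Rightarrow> 'x) \<Rightarrow> 'x \<Rightarrow> ('x \<Rightarrow> 'x) \<Rightarrow> bool" where
  "abgrp S ad z ng \<longleftrightarrow> z \<in> S \<and> (\<forall>x\<in>S. \<forall>y\<in>S. ad x y \<in> S) \<and> (\<forall>x\<in>S. ng x \<in> S)
     \<and> (\<forall>x\<in>S. \<forall>y\<in>S. \<forall>w\<in>S. ad (ad x y) w = ad x (ad y w))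
     \<and> (\<forall>x\<in>S. \<forall>y\<in>S. ad x y = ad y x)
     \<and> (\<forall>x\<in>S. ad z x = x) \<and> (\<forall>x\<in>S. ad (ng x) x = z)"

fun hsum :: "('x \<Rightarrow> 'x \<Rightarrow> 'x) \<Rightarrow> 'x \<Rightarrow> (nat \<Rightarrow> 'x) \<Rightarrow> nat \<Rightarrow> 'x" where
  "hsum ad z f 0 = z"
| "hsum ad z f (Suc n) = ad (hsum ad z f n) (f n)"

definition is_iso :: "('o,'a,'e,'k) extri \<Rightarrow> 'a \<Rightarrow> bool" where
  "is_iso E f \<longleftrightarrow> (\<exists>X Y. f \<in> hom E X Y \<and>
     (\<exists>g\<in>hom E Y X. cmp E g f = idm E X \<and> cmp E f g = idm E Y))"

definition isomorphic :: "('o,'a,'e,'k) extri \<Rightarrow> 'o \<Rightarrow> 'o \<Rightarrow> bool" where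
  "isomorphic E X Y \<longleftrightarrow> (\<exists>f\<in>hom E X Y. is_iso E f)"

definition zero_obj :: "('o,'a,'e,'k) extri \<Rightarrow> 'o \<Rightarrow> bool" where
  "zero_obj E Z \<longleftrightarrow> Z \<in> obj E \<and> idm E Z = mzero E Z Z"

definition biprod :: "('o,'a,'e,'k) extri \<Rightarrow> 'o \<Rightarrow> 'o \<Rightarrow> 'o \<Rightarrow> 'a \<Rightarrow> 'a \<Rightarrow> 'a \<Rightarrow> 'a \<Rightarrow> bool" where
  "biprod E X1 X2 S i1 i2 p1 p2 \<longleftrightarrow> S \<in> obj E \<and>
     i1 \<in> hom E X1 S \<and> i2 \<in> hom E X2 S \<and> p1 \<in> hom E S X1 \<and> p2 \<in> hom E S X2 \<and>
     cmp E p1 i1 = idm E X1 \<and> cmp E p2 i2 = idm E X2 \<and>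
     cmp E p2 i1 = mzero E X1 X2 \<and> cmp E p1 i2 = mzero E X2 X1 \<and>
     madd E (cmp E i1 p1) (cmp E i2 p2) = idm E S"

definition additive_cat :: "('o,'a,'e,'k) extri \<Rightarrow> bool" where
  "additive_cat E \<longleftrightarrow>
    (\<forall>X Y. (X \<notin> obj E \<or> Y \<notin> obj E) \<longrightarrow> hom E X Y = {}) \<and>
    (\<forall>X Y X' Y'. hom E X Y \<inter> hom E X' Y' \<noteq> {} \<longrightarrow> X = X' \<and> Y = Y') \<and>
    (\<forall>X\<in>obj E. idm E X \<in> hom E X X) \<and>
    (\<forall>X Y Z f g. f \<in> hom E X Y \<longrightarrow> g \<in> hom E Y Z \<longrightarrow> cmp E g f \<in> hom E X Z) \<and>
    (\<forall>X Y Z W f g h. f \<in> hom E X Y \<longrightarrow> g \<in> hom E Y Z \<longrightarrow> h \<in> hom E Z W \<longrightarrow>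
        cmp E h (cmp E g f) = cmp E (cmp E h g) f) \<and>
    (\<forall>X Y f. f \<in> hom E X Y \<longrightarrow> cmp E (idm E Y) f = f \<and> cmp E f (idm E X) = f) \<and>
    (\<forall>X\<in>obj E. \<forall>Y\<in>obj E. abgrp (hom E X Y) (madd E) (mzero E X Y) (mneg E)) \<and>
    (\<forall>X Y Z f f' g. f \<in> hom E X Y \<longrightarrow> f' \<in> hom E X Y \<longrightarrow> g \<in> hom E Y Z \<longrightarrow>
        cmp E g (madd E f f') = madd E (cmp E g f) (cmp E g f')) \<and>
    (\<forall>X Y Z f g g'. f \<in> hom E X Y \<longrightarrow> g \<in> hom E Y Z \<longrightarrow> g' \<in> hom E Y Z \<longrightarrow>
        cmp E (madd E g g') f = madd E (cmp E g f) (cmp E g' f)) \<and>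
    (\<exists>Z. zero_obj E Z) \<and>
    (\<forall>X1\<in>obj E. \<forall>X2\<in>obj E. \<exists>S i1 i2 p1 p2. biprod E X1 X2 S i1 i2 p1 p2)"

definition lincomb :: "('o,'a,'e,'k) extri \<Rightarrow> 'o \<Rightarrow> 'o \<Rightarrow> 'k list \<Rightarrow> 'a list \<Rightarrow> 'a" where
  "lincomb E X Y cs fs = hsum (madd E) (mzero E X Y) (\<lambda>i. smul E (cs ! i) (fs ! i)) (length fs)"

definition klinear_homfinite :: "('o,'a,'e,'k::field) extri \<Rightarrow> bool" where
  "klinear_homfinite E \<longleftrightarrow>
    (\<forall>X Y f c. f \<in> hom E X Y \<longrightarrow> smul E c f \<in> hom E X Y) \<and>
    (\<forall>X Y f g c. f \<in> hom E X Y \<longrightarrow> g \<in> hom E X Y \<longrightarrow>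
        smul E c (madd E f g) = madd E (smul E c f) (smul E c g)) \<and>
    (\<forall>X Y f c d. f \<in> hom E X Y \<longrightarrow> smul E (c + d) f = madd E (smul E c f) (smul E d f)) \<and>
    (\<forall>X Y f c d. f \<in> hom E X Y \<longrightarrow> smul E (c * d) f = smul E c (smul E d f)) \<and>
    (\<forall>X Y f. f \<in> hom E X Y \<longrightarrow> smul E 1 f = f) \<and>
    (\<forall>X Y Z f g c. f \<in> hom E X Y \<longrightarrow> g \<in> hom E Y Z \<longrightarrow>
        cmp E (smul E c g) f = smul E c (cmp E g f) \<and> cmp E g (smul E c f) = smul E c (cmp E g f)) \<and>
    (\<forall>X\<in>obj E. \<forall>Y\<in>obj E. \<exists>fs. set fs \<subseteq> hom E X Y \<and>
        (\<forall>f\<in>hom E X Y. \<exists>cs. length cs = length fs \<and> f = lincomb E X Y cs fs))"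

definition biadditive_ext :: "('o,'a,'e,'k) extri \<Rightarrow> bool" where
  "biadditive_ext E \<longleftrightarrow>
    (\<forall>C A. (C \<notin> obj E \<or> A \<notin> obj E) \<longrightarrow> ext E C A = {}) \<and>
    (\<forall>C A C' A'. ext E C A \<inter> ext E C' A' \<noteq> {} \<longrightarrow> C = C' \<and> A = A') \<and>
    (\<forall>C\<in>obj E. \<forall>A\<in>obj E. abgrp (ext E C A) (eadd E) (ezero E C A) (eneg E)) \<and>
    (\<forall>C' C A c d. c \<in> hom E C' C \<longrightarrow> d \<in> ext E C A \<longrightarrow> epull E c d \<in> ext E C' A) \<and>
    (\<forall>C A A' a d. a \<in> hom E A A' \<longrightarrow> d \<in> ext E C A \<longrightarrow> epush E a d \<in> ext E C A') \<and>
    (\<forall>C A d. d \<in> ext E C A \<longrightarrow> epull E (idm E C) d = d \<and> epush E (idm E A) d = d) \<and>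
    (\<forall>C'' C' C A c c' d. c' \<in> hom E C'' C' \<longrightarrow> c \<in> hom E C' C \<longrightarrow> d \<in> ext E C A \<longrightarrow>
        epull E (cmp E c c') d = epull E c' (epull E c d)) \<and>
    (\<forall>C A A' A'' a a' d. a \<in> hom E A A' \<longrightarrow> a' \<in> hom E A' A'' \<longrightarrow> d \<in> ext E C A \<longrightarrow>
        epush E (cmp E a' a) d = epush E a' (epush E a d)) \<and>
    (\<forall>C' C A A' c a d. c \<in> hom E C' C \<longrightarrow> a \<in> hom E A A' \<longrightarrow> d \<in> ext E C A \<longrightarrow>
        epush E a (epull E c d) = epull E c (epush E a d)) \<and>
    (\<forall>C' C A c d d'. c \<in> hom E C' C \<longrightarrow> d \<in> ext E C A \<longrightarrow> d' \<in> ext E C A \<longrightarrow>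
        epull E c (eadd E d d') = eadd E (epull E c d) (epull E c d')) \<and>
    (\<forall>C A A' a d d'. a \<in> hom E A A' \<longrightarrow> d \<in> ext E C A \<longrightarrow> d' \<in> ext E C A \<longrightarrow>
        epush E a (eadd E d d') = eadd E (epush E a d) (epush E a d')) \<and>
    (\<forall>C' C A c c' d. c \<in> hom E C' C \<longrightarrow> c' \<in> hom E C' C \<longrightarrow> d \<in> ext E C A \<longrightarrow>
        epull E (madd E c c') d = eadd E (epull E c d) (epull E c' d)) \<and>
    (\<forall>C A A' a a' d. a \<in> hom E A A' \<longrightarrow> a' \<in> hom E A A' \<longrightarrow> d \<in> ext E C A \<longrightarrow>
        epush E (madd E a a') d = eadd E (epush E a d) (epush E a' d))"

text \<open>s is an additive realization (Nakaoka--Palu Def. 2.9, 2.10).\<close>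
definition additive_realization :: "('o,'a,'e,'k) extri \<Rightarrow> bool" where
  "additive_realization E \<longleftrightarrow>
    (\<forall>d A x B y C. realizes E d A x B y C \<longrightarrow>
        d \<in> ext E C A \<and> x \<in> hom E A B \<and> y \<in> hom E B C) \<and>
    (\<forall>C A d. d \<in> ext E C A \<longrightarrow> (\<exists>B x y. realizes E d A x B y C)) \<and>
    (\<forall>d A x B y C A' x' B' y' C'. realizes E d A x B y C \<longrightarrow>
        (realizes E d A' x' B' y' C' \<longleftrightarrow>
          A' = A \<and> C' = C \<and> x' \<in> hom E A B' \<and> y' \<in> hom E B' C \<and>
          (\<exists>b\<in>hom E B B'. is_iso E b \<and> cmp E b x = x' \<and> cmp E y' b = y))) \<and>
    (\<forall>d d' A x B y C A' x' B' y' C' a c.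
        realizes E d A x B y C \<longrightarrow> realizes E d' A' x' B' y' C' \<longrightarrow>
        a \<in> hom E A A' \<longrightarrow> c \<in> hom E C C' \<longrightarrow> epush E a d = epull E c d' \<longrightarrow>
        (\<exists>b\<in>hom E B B'. cmp E b x = cmp E x' a \<and> cmp E y' b = cmp E c y)) \<and>
    (\<forall>A C S i1 i2 p1 p2. biprod E A C S i1 i2 p1 p2 \<longrightarrow>
        realizes E (ezero E C A) A i1 S p2 C) \<and>
    (\<forall>d d' A x B y C A' x' B' y' C' SA ia1 ia2 pa1 pa2 SB ib1 ib2 pb1 pb2
        SC ic1 ic2 pc1 pc2 e.
        realizes E d A x B y C \<longrightarrow> realizes E d' A' x' B' y' C' \<longrightarrow>
        biprod E A A' SA ia1 ia2 pa1 pa2 \<longrightarrow> biprod E B B' SB ib1 ib2 pb1 pb2 \<longrightarrow>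
        biprod E C C' SC ic1 ic2 pc1 pc2 \<longrightarrow> e \<in> ext E SC SA \<longrightarrow>
        epush E pa1 (epull E ic1 e) = d \<longrightarrow> epush E pa2 (epull E ic2 e) = d' \<longrightarrow>
        epush E pa1 (epull E ic2 e) = ezero E C' A \<longrightarrow>
        epush E pa2 (epull E ic1 e) = ezero E C A' \<longrightarrow>
        realizes E e SA (madd E (cmp E ib1 (cmp E x pa1)) (cmp E ib2 (cmp E x' pa2))) SB
                        (madd E (cmp E ic1 (cmp E y pb1)) (cmp E ic2 (cmp E y' pb2))) SC)"

definition ET3 :: "('o,'a,'e,'k) extri \<Rightarrow> bool" where
  "ET3 E \<longleftrightarrow> (\<forall>d d' A x B y C A' x' B' y' C' a b.
     realizes E d A x B y C \<longrightarrow> realizes E d' A' x' B' y' C' \<longrightarrow>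
     a \<in> hom E A A' \<longrightarrow> b \<in> hom E B B' \<longrightarrow> cmp E b x = cmp E x' a \<longrightarrow>
     (\<exists>c\<in>hom E C C'. epush E a d = epull E c d' \<and> cmp E c y = cmp E y' b))"

definition ET3op :: "('o,'a,'e,'k) extri \<Rightarrow> bool" where
  "ET3op E \<longleftrightarrow> (\<forall>d d' A x B y C A' x' B' y' C' b c.
     realizes E d A x B y C \<longrightarrow> realizes E d' A' x' B' y' C' \<longrightarrow>
     b \<in> hom E B B' \<longrightarrow> c \<in> hom E C C' \<longrightarrow> cmp E y' b = cmp E c y \<longrightarrow>
     (\<exists>a\<in>hom E A A'. epush E a d = epull E c d' \<and> cmp E x' a = cmp E b x))"

definition ET4 :: "('o,'a,'e,'k) extri \<Rightarrow> bool" where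
  "ET4 E \<longleftrightarrow> (\<forall>d d' A f B f' D g C g' F.
     realizes E d A f B f' D \<longrightarrow> realizes E d' B g C g' F \<longrightarrow>
     (\<exists>Eo h' dd e d''. realizes E d'' A (cmp E g f) C h' Eo \<and>
        realizes E (epush E f' d') D dd Eo e F \<and>
        cmp E dd f' = cmp E h' g \<and> cmp E e h' = g' \<and>
        epull E dd d'' = d \<and> epush E f d'' = epull E e d'))"

definition ET4op :: "('o,'a,'e,'k) extri \<Rightarrow> bool" where
  "ET4op E \<longleftrightarrow> (\<forall>d d' D f' B f A F g' C g.
     realizes E d D f' B f A \<longrightarrow> realizes E d' F g' C g B \<longrightarrow>
     (\<exists>Eo h' dd e d''. realizes E d'' Eo h' C (cmp E f g) A \<and>
        realizes E (epull E f' d') F e Eo dd D \<and>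
        cmp E f' dd = cmp E g h' \<and> cmp E h' e = g' \<and>
        epush E dd d'' = d \<and> epull E f d'' = epush E e d'))"

definition inflation :: "('o,'a,'e,'k) extri \<Rightarrow> 'a \<Rightarrow> bool" where
  "inflation E x \<longleftrightarrow> (\<exists>d A B y C. realizes E d A x B y C)"

definition deflation :: "('o,'a,'e,'k) extri \<Rightarrow> 'a \<Rightarrow> bool" where
  "deflation E y \<longleftrightarrow> (\<exists>d A x B C. realizes E d A x B y C)"

definition compatible :: "('o,'a,'e,'k) extri \<Rightarrow> 'a \<Rightarrow> bool" where
  "compatible E f \<longleftrightarrow> (inflation E f \<and> deflation E f \<longrightarrow> is_iso E f)"

definition projective :: "('o,'a,'e,'k) extri \<Rightarrow> 'o \<Rightarrow> bool" where
  "projective E P \<longleftrightarrow> P \<in> obj E \<and> (\<forall>d A x B y C c. realizes E d A x B y C \<longrightarrow>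
      c \<in> hom E P C \<longrightarrow> (\<exists>b\<in>hom E P B. cmp E y b = c))"

definition injective :: "('o,'a,'e,'k) extri \<Rightarrow> 'o \<Rightarrow> bool" where
  "injective E I \<longleftrightarrow> I \<in> obj E \<and> (\<forall>d A x B y C a. realizes E d A x B y C \<longrightarrow>
      a \<in> hom E A I \<longrightarrow> (\<exists>b\<in>hom E B I. cmp E b x = a))"

definition local_end :: "('o,'a,'e,'k) extri \<Rightarrow> 'o \<Rightarrow> bool" where
  "local_end E X \<longleftrightarrow> X \<in> obj E \<and> \<not> zero_obj E X \<and>
     (\<forall>f\<in>hom E X X. is_iso E f \<or> is_iso E (madd E (idm E X) (mneg E f)))"

definition krull_schmidt :: "('o,'a,'e,'k) extri \<Rightarrow> bool" where
  "krull_schmidt E \<longleftrightarrow> (\<forall>X\<in>obj E. \<exists>n Y \<iota> \<pi>.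
     (\<forall>i<n. local_end E (Y i) \<and> \<iota> i \<in> hom E (Y i) X \<and> \<pi> i \<in> hom E X (Y i)) \<and>
     (\<forall>i<n. \<forall>j<n. cmp E (\<pi> i) (\<iota> j) = (if i = j then idm E (Y i) else mzero E (Y j) (Y i))) \<and>
     hsum (madd E) (mzero E X X) (\<lambda>i. cmp E (\<iota> i) (\<pi> i)) n = idm E X)"

definition WIC :: "('o,'a,'e,'k) extri \<Rightarrow> bool" where
  "WIC E \<longleftrightarrow> (\<forall>X Y Z f g. f \<in> hom E X Y \<longrightarrow> g \<in> hom E Y Z \<longrightarrow>
      (inflation E (cmp E g f) \<longrightarrow> inflation E f) \<and>
      (deflation E (cmp E g f) \<longrightarrow> deflation E g))"

definition enough_proj_inj :: "('o,'a,'e,'k) extri \<Rightarrow> bool" where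
  "enough_proj_inj E \<longleftrightarrow> (\<forall>C\<in>obj E. \<exists>d A x P y. realizes E d A x P y C \<and> projective E P)
     \<and> (\<forall>A\<in>obj E. \<exists>d I x C y. realizes E d A x I y C \<and> injective E I)"

definition good_extri :: "('o,'a,'e,'k::field) extri \<Rightarrow> bool" where
  "good_extri E \<longleftrightarrow> additive_cat E \<and> biadditive_ext E \<and> additive_realization E \<and>
     ET3 E \<and> ET3op E \<and> ET4 E \<and> ET4op E \<and>
     klinear_homfinite E \<and> krull_schmidt E \<and> enough_proj_inj E \<and> WIC E"

text \<open>A finite E-triangle sequence X_n \<rightarrow> ... \<rightarrow> X_0 \<rightarrow> C with all X_i projective.\<close>
definition proj_res :: "('o,'a,'e,'k) extri \<Rightarrow> 'o \<Rightarrow> nat \<Rightarrow> bool" where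
  "proj_res E C n \<longleftrightarrow> (\<exists>K X :: nat \<Rightarrow> 'o. K 0 = C \<and> K n = X n \<and>
     (\<forall>i<n. \<exists>d g f. realizes E d (K (Suc i)) g (X i) f (K i)) \<and>
     (\<forall>i\<le>n. projective E (X i)))"

definition pd :: "('o,'a,'e,'k) extri \<Rightarrow> 'o \<Rightarrow> enat" where
  "pd E C = (if \<exists>n. proj_res E C n then enat (LEAST n. proj_res E C n) else \<infinity>)"

record ('o1,'a1,'o2,'a2) fctr =
  fo :: "'o1 \<Rightarrow> 'o2"
  fm :: "'a1 \<Rightarrow> 'a2"

definition additive_functor :: "('o1,'a1,'e1,'k) extri \<Rightarrow> ('o2,'a2,'e2,'k) extri \<Rightarrow>
    ('o1,'a1,'o2,'a2) fctr \<Rightarrow> bool" where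
  "additive_functor S T F \<longleftrightarrow>
    (\<forall>X\<in>obj S. fo F X \<in> obj T) \<and>
    (\<forall>X Y f. f \<in> hom S X Y \<longrightarrow> fm F f \<in> hom T (fo F X) (fo F Y)) \<and>
    (\<forall>X\<in>obj S. fm F (idm S X) = idm T (fo F X)) \<and>
    (\<forall>X Y Z f g. f \<in> hom S X Y \<longrightarrow> g \<in> hom S Y Z \<longrightarrow> fm F (cmp S g f) = cmp T (fm F g) (fm F f)) \<and>
    (\<forall>X Y f g. f \<in> hom S X Y \<longrightarrow> g \<in> hom S X Y \<longrightarrow> fm F (madd S f g) = madd T (fm F f) (fm F g))"

definition preserves_compatible :: "('o1,'a1,'e1,'k) extri \<Rightarrow> ('o2,'a2,'e2,'k) extri \<Rightarrow>
    ('o1,'a1,'o2,'a2) fctr \<Rightarrow> bool" where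
  "preserves_compatible S T F \<longleftrightarrow>
    (\<forall>X Y f. f \<in> hom S X Y \<longrightarrow> compatible S f \<longrightarrow> compatible T (fm F f))"

definition right_exact_seq :: "('o,'a,'e,'k) extri \<Rightarrow> 'o \<Rightarrow> 'a \<Rightarrow> 'o \<Rightarrow> 'a \<Rightarrow> 'o \<Rightarrow> bool" where
  "right_exact_seq E A f B g C \<longleftrightarrow> f \<in> hom E A B \<and> g \<in> hom E B C \<and>
     (\<exists>K h2 d h1. realizes E d K h2 B g C \<and> h1 \<in> hom E A K \<and>
        compatible E h1 \<and> deflation E h1 \<and> f = cmp E h2 h1)"

definition left_exact_seq :: "('o,'a,'e,'k) extri \<Rightarrow> 'o \<Rightarrow> 'a \<Rightarrow> 'o \<Rightarrow> 'a \<Rightarrow> 'o \<Rightarrow> bool" where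
  "left_exact_seq E A f B g C \<longleftrightarrow> f \<in> hom E A B \<and> g \<in> hom E B C \<and>
     (\<exists>K h1 d h2. realizes E d A f B h1 K \<and> h2 \<in> hom E K C \<and>
        compatible E h2 \<and> inflation E h2 \<and> g = cmp E h2 h1)"

definition right_exact_seq4 :: "('o,'a,'e,'k) extri \<Rightarrow> 'o \<Rightarrow> 'a \<Rightarrow> 'o \<Rightarrow> 'a \<Rightarrow> 'o \<Rightarrow> 'a \<Rightarrow> 'o \<Rightarrow> bool" where
  "right_exact_seq4 E A f B g C h D \<longleftrightarrow>
     (\<exists>K g1 g2 d1 d2. realizes E d1 A f B g1 K \<and> realizes E d2 K g2 C h D \<and>
        g = cmp E g2 g1 \<and> compatible E g1)"

definition left_exact_seq4 :: "('o,'a,'e,'k) extri \<Rightarrow> 'o \<Rightarrow> 'a \<Rightarrow> 'o \<Rightarrow> 'a \<Rightarrow> 'o \<Rightarrow> 'a \<Rightarrow> 'o \<Rightarrow> bool" where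
  "left_exact_seq4 E A f B g C h D \<longleftrightarrow>
     (\<exists>K g1 g2 d1 d2. realizes E d1 A f B g1 K \<and> realizes E d2 K g2 C h D \<and>
        g = cmp E g2 g1 \<and> compatible E g2)"

definition exact_functor :: "('o1,'a1,'e1,'k) extri \<Rightarrow> ('o2,'a2,'e2,'k) extri \<Rightarrow>
    ('o1,'a1,'o2,'a2) fctr \<Rightarrow> bool" where
  "exact_functor S T F \<longleftrightarrow> additive_functor S T F \<and> preserves_compatible S T F \<and>
    (\<exists>\<eta> :: 'e1 \<Rightarrow> 'e2.
      (\<forall>C A d. d \<in> ext S C A \<longrightarrow> \<eta> d \<in> ext T (fo F C) (fo F A)) \<and>
      (\<forall>C A d d'. d \<in> ext S C A \<longrightarrow> d' \<in> ext S C A \<longrightarrow> \<eta> (eadd S d d') = eadd T (\<eta> d) (\<eta> d')) \<and>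
      (\<forall>C' C A c d. c \<in> hom S C' C \<longrightarrow> d \<in> ext S C A \<longrightarrow>
          \<eta> (epull S c d) = epull T (fm F c) (\<eta> d)) \<and>
      (\<forall>C A A' a d. a \<in> hom S A A' \<longrightarrow> d \<in> ext S C A \<longrightarrow>
          \<eta> (epush S a d) = epush T (fm F a) (\<eta> d)) \<and>
      (\<forall>d A x B y C. realizes S d A x B y C \<longrightarrow>
          realizes T (\<eta> d) (fo F A) (fm F x) (fo F B) (fm F y) (fo F C)))"

definition right_exact_functor :: "('o1,'a1,'e1,'k) extri \<Rightarrow> ('o2,'a2,'e2,'k) extri \<Rightarrow>
    ('o1,'a1,'o2,'a2) fctr \<Rightarrow> bool" where
  "right_exact_functor S T F \<longleftrightarrow> additive_functor S T F \<and> preserves_compatible S T F \<and>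
    (\<forall>A f B g C. right_exact_seq S A f B g C \<longrightarrow>
        right_exact_seq T (fo F A) (fm F f) (fo F B) (fm F g) (fo F C)) \<and>
    (\<forall>d A f B g C. realizes S d A f B g C \<longrightarrow>
       (\<exists>A' x y e. realizes T e A' x (fo F B) (fm F g) (fo F C) \<and>
          y \<in> hom T (fo F A) A' \<and> compatible T y \<and> deflation T y \<and> fm F f = cmp T x y))"

definition left_exact_functor :: "('o1,'a1,'e1,'k) extri \<Rightarrow> ('o2,'a2,'e2,'k) extri \<Rightarrow>
    ('o1,'a1,'o2,'a2) fctr \<Rightarrow> bool" where
  "left_exact_functor S T F \<longleftrightarrow> additive_functor S T F \<and> preserves_compatible S T F \<and>
    (\<forall>A f B g C. left_exact_seq S A f B g C \<longrightarrow>
        left_exact_seq T (fo F A) (fm F f) (fo F B) (fm F g) (fo F C)) \<and>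
    (\<forall>d A f B g C. realizes S d A f B g C \<longrightarrow>
       (\<exists>C' x y e. realizes T e (fo F A) (fm F f) (fo F B) x C' \<and>
          y \<in> hom T C' (fo F C) \<and> compatible T y \<and> inflation T y \<and> fm F g = cmp T y x))"

definition fully_faithful :: "('o1,'a1,'e1,'k) extri \<Rightarrow> ('o2,'a2,'e2,'k) extri \<Rightarrow>
    ('o1,'a1,'o2,'a2) fctr \<Rightarrow> bool" where
  "fully_faithful S T F \<longleftrightarrow> (\<forall>X\<in>obj S. \<forall>Y\<in>obj S.
     bij_betw (fm F) (hom S X Y) (hom T (fo F X) (fo F Y)))"

definition adjunction :: "('o1,'a1,'e1,'k) extri \<Rightarrow> ('o2,'a2,'e2,'k) extri \<Rightarrow>
    ('o1,'a1,'o2,'a2) fctr \<Rightarrow> ('o2,'a2,'o1,'a1) fctr \<Rightarrow> ('o1 \<Rightarrow> 'a1) \<Rightarrow> ('o2 \<Rightarrow> 'a2) \<Rightarrow> bool" where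
  "adjunction S T F G un cu \<longleftrightarrow>
    (\<forall>X\<in>obj S. un X \<in> hom S X (fo G (fo F X))) \<and>
    (\<forall>Y\<in>obj T. cu Y \<in> hom T (fo F (fo G Y)) Y) \<and>
    (\<forall>X X' f. f \<in> hom S X X' \<longrightarrow> cmp S (un X') f = cmp S (fm G (fm F f)) (un X)) \<and>
    (\<forall>Y Y' g. g \<in> hom T Y Y' \<longrightarrow> cmp T g (cu Y) = cmp T (cu Y') (fm F (fm G g))) \<and>
    (\<forall>X\<in>obj S. cmp T (cu (fo F X)) (fm F (un X)) = idm T (fo F X)) \<and>
    (\<forall>Y\<in>obj T. cmp S (fm G (cu Y)) (un (fo G Y)) = idm S (fo G Y))"

definition recollement ::
  "('oa,'ma,'ea,'k) extri \<Rightarrow> ('ob,'mb,'eb,'k) extri \<Rightarrow> ('oc,'mc,'ec,'k) extri \<Rightarrow>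
   ('ob,'mb,'oa,'ma) fctr \<Rightarrow> ('oa,'ma,'ob,'mb) fctr \<Rightarrow> ('ob,'mb,'oa,'ma) fctr \<Rightarrow>
   ('oc,'mc,'ob,'mb) fctr \<Rightarrow> ('ob,'mb,'oc,'mc) fctr \<Rightarrow> ('oc,'mc,'ob,'mb) fctr \<Rightarrow> bool" where
  "recollement A B C iup ilow ish jsh jup jlow \<longleftrightarrow>
    exact_functor A B ilow \<and> exact_functor B C jup \<and>
    right_exact_functor B A iup \<and> right_exact_functor C B jsh \<and>
    left_exact_functor B A ish \<and> left_exact_functor C B jlow \<and>
    (\<exists>nu cu1 un2 theta upsilon un4 vartheta cu4.
      adjunction B A iup ilow nu cu1 \<and> adjunction A B ilow ish un2 theta \<and>
      adjunction C B jsh jup un4 upsilon \<and> adjunction B C jup jlow vartheta cu4 \<and>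
      \<comment> \<open>(R2)\<close>
      (\<forall>Y. (Y \<in> obj B \<and> (\<exists>X\<in>obj A. isomorphic B Y (fo ilow X))) \<longleftrightarrow>
           (Y \<in> obj B \<and> zero_obj C (fo jup Y))) \<and>
      \<comment> \<open>(R3)\<close>
      fully_faithful A B ilow \<and> fully_faithful C B jsh \<and> fully_faithful C B jlow \<and>
      \<comment> \<open>(R4)\<close>
      (\<forall>Y\<in>obj B. \<exists>X\<in>obj A. \<exists>h.
         left_exact_seq4 B (fo ilow (fo ish Y)) (theta Y) Y (vartheta Y)
            (fo jlow (fo jup Y)) h (fo ilow X)) \<and>
      \<comment> \<open>(R5)\<close>
      (\<forall>Y\<in>obj B. \<exists>X\<in>obj A. \<exists>h.
         right_exact_seq4 B (fo ilow X) h (fo jsh (fo jup Y)) (upsilon Y) Y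
            (nu Y) (fo ilow (fo iup Y))))"

definition gl_rel :: "('oa,'ma,'ea,'k) extri \<Rightarrow> ('ob,'mb,'eb,'k) extri \<Rightarrow>
    ('oa,'ma,'ob,'mb) fctr \<Rightarrow> enat" where
  "gl_rel A B ilow = (SUP X\<in>obj A. pd B (fo ilow X))"

end

(* Apply j_! to a projective resolution K_{i+1} -> P_i -> K_i of X of length n.  Being left adjoint
   to the exact functor j^*, j_! preserves projectives.  Right exactness of j_! turns each conflation
   into a conflation A' -> j_! P_i -> j_! K_i together with a deflation j_! K_{i+1} -> A' whose cocone
   L is killed by j^*, because j^* j_! is isomorphic to the identity; by (R2) L lies in the image of
   i_*, so pd L <= gl.  In any extriangulated category with enough projectives
   pd A' <= max (pd j_! K_{i+1}) (pd L + 1) and pd j_! K_i <= pd A' + 1, so descending induction on i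
   gives pd j_! K_i <= gl + 1 + (n - i). *)

theory Submission
  imports Defs
begin

lemma abgrp_zero_mem: "abgrp S ad z ng \<Longrightarrow> z \<in> S"
  unfolding abgrp_def by blast

lemma abgrp_add_mem: "abgrp S ad z ng \<Longrightarrow> x \<in> S \<Longrightarrow> y \<in> S \<Longrightarrow> ad x y \<in> S"
  unfolding abgrp_def by blast

lemma abgrp_neg_mem: "abgrp S ad z ng \<Longrightarrow> x \<in> S \<Longrightarrow> ng x \<in> S"
  unfolding abgrp_def by blast

lemma abgrp_assoc:
  "abgrp S ad z ng \<Longrightarrow> x \<in> S \<Longrightarrow> y \<in> S \<Longrightarrow> w \<in> S \<Longrightarrow> ad (ad x y) w = ad x (ad y w)"
  unfolding abgrp_def by blast

lemma abgrp_commute: "abgrp S ad z ng \<Longrightarrow> x \<in> S \<Longrightarrow> y \<in> S \<Longrightarrow> ad x y = ad y x"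
  unfolding abgrp_def by blast

lemma abgrp_zero_left: "abgrp S ad z ng \<Longrightarrow> x \<in> S \<Longrightarrow> ad z x = x"
  unfolding abgrp_def by blast

lemma abgrp_zero_right: assumes "abgrp S ad z ng" and "x \<in> S" shows "ad x z = x"
  using abgrp_commute[OF assms abgrp_zero_mem[OF assms(1)]] abgrp_zero_left[OF assms] by simp

lemma abgrp_neg_left: "abgrp S ad z ng \<Longrightarrow> x \<in> S \<Longrightarrow> ad (ng x) x = z"
  unfolding abgrp_def by blast

lemma abgrp_neg_right: assumes "abgrp S ad z ng" and "x \<in> S" shows "ad x (ng x) = z"
  using abgrp_commute[OF assms abgrp_neg_mem[OF assms]] abgrp_neg_left[OF assms] by simp

lemma abgrp_cancel_left:
  assumes G: "abgrp S ad z ng" and S: "x \<in> S" "y \<in> S" "w \<in> S" and eq: "ad x y = ad x w"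
  shows "y = w"
proof -
  have "y = ad (ad (ng x) x) y" using G S by (simp add: abgrp_neg_left abgrp_zero_left)
  also have "\<dots> = ad (ng x) (ad x w)" using G S eq by (simp add: abgrp_assoc abgrp_neg_mem)
  also have "\<dots> = w"
    using G S by (simp add: abgrp_assoc[symmetric] abgrp_neg_mem abgrp_neg_left abgrp_zero_left)
  finally show ?thesis .
qed

lemma abgrp_idem_eq_zero: assumes G: "abgrp S ad z ng" and x: "x \<in> S" and "ad x x = x" shows "x = z"
  using abgrp_cancel_left[OF G x x abgrp_zero_mem[OF G]] abgrp_zero_right[OF G x] assms(3) by simp

lemma abgrp_neg_unique:
  assumes G: "abgrp S ad z ng" and x: "x \<in> S" and y: "y \<in> S" and "ad x y = z" shows "y = ng x"
  using abgrp_cancel_left[OF G x y abgrp_neg_mem[OF G x]] abgrp_neg_right[OF G x] assms(4) by simp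

lemma abgrp_neg_zero: assumes G: "abgrp S ad z ng" shows "ng z = z"
  using abgrp_neg_unique[OF G abgrp_zero_mem[OF G] abgrp_zero_mem[OF G]]
    abgrp_zero_right[OF G abgrp_zero_mem[OF G]] by simp

lemma proj_res_0_iff: "proj_res E C 0 \<longleftrightarrow> projective E C"
  unfolding proj_res_def by (auto intro!: exI[of _ "\<lambda>_. C"])

lemma proj_res_Suc_iff:
  "proj_res E C (Suc n) \<longleftrightarrow>
    (\<exists>d K g P f. realizes E d K g P f C \<and> projective E P \<and> proj_res E K n)"
proof
  assume "proj_res E C (Suc n)"
  then obtain K X where KX: "K 0 = C" "K (Suc n) = X (Suc n)"
    "\<forall>i<Suc n. \<exists>d g f. realizes E d (K (Suc i)) g (X i) f (K i)" "\<forall>i\<le>Suc n. projective E (X i)"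
    unfolding proj_res_def by blast
  have steps: "\<forall>i<n. \<exists>d g f. realizes E d (K (Suc (Suc i))) g (X (Suc i)) f (K (Suc i))"
    using KX(3) by simp
  have proj: "\<forall>i\<le>n. projective E (X (Suc i))" using KX(4) by simp
  have "proj_res E (K (Suc 0)) n"
    unfolding proj_res_def
    by (rule exI[of _ "\<lambda>i. K (Suc i)"], rule exI[of _ "\<lambda>i. X (Suc i)"]) (simp add: KX(2) steps proj)
  moreover obtain d g f where "realizes E d (K (Suc 0)) g (X 0) f (K 0)" using KX(3) by auto
  moreover have "projective E (X 0)" using KX(4) by simp
  ultimately show "\<exists>d K g P f. realizes E d K g P f C \<and> projective E P \<and> proj_res E K n"
    using KX(1) by blast
next
  assume "\<exists>d K g P f. realizes E d K g P f C \<and> projective E P \<and> proj_res E K n"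
  then obtain d K1 g P f K X where T: "realizes E d K1 g P f C" and P: "projective E P"
    and KX: "K 0 = K1" "K n = X n" "\<forall>i<n. \<exists>d g f. realizes E d (K (Suc i)) g (X i) f (K i)"
      "\<forall>i\<le>n. projective E (X i)"
    unfolding proj_res_def by (elim exE conjE) blast
  define K' where "K' i = (if i = 0 then C else K (i - 1))" for i
  define X' where "X' i = (if i = 0 then P else X (i - 1))" for i
  have steps: "\<forall>i<Suc n. \<exists>d g f. realizes E d (K' (Suc i)) g (X' i) f (K' i)"
  proof (intro allI impI)
    fix i assume "i < Suc n"
    then show "\<exists>d g f. realizes E d (K' (Suc i)) g (X' i) f (K' i)"
      using T KX(1,3) unfolding K'_def X'_def by (cases i) auto
  qed
  have proj: "\<forall>i\<le>Suc n. projective E (X' i)"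
  proof (intro allI impI)
    fix i assume "i \<le> Suc n"
    then show "projective E (X' i)" using P KX(4) unfolding X'_def by (cases i) auto
  qed
  have ends: "K' 0 = C" "K' (Suc n) = X' (Suc n)" using KX(2) unfolding K'_def X'_def by simp_all
  show "proj_res E C (Suc n)"
    unfolding proj_res_def by (rule exI[of _ K'], rule exI[of _ X']) (simp add: ends steps proj)
qed

section \<open>Extriangulated categories\<close>

locale good_extriangulated =
  fixes E :: "('o,'a,'e,'k::field) extri"
  assumes good: "good_extri E"
begin

lemma additive_cat: "additive_cat E"
  and biadditive_ext: "biadditive_ext E"
  and additive_realization: "additive_realization E"
  and ET3: "ET3 E" and ET4: "ET4 E" and ET4op: "ET4op E"
  and WIC: "WIC E"
  using good by (simp_all add: good_extri_def)

lemma hom_objs: "f \<in> hom E X Y \<Longrightarrow> X \<in> obj E \<and> Y \<in> obj E"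
  using additive_cat[unfolded additive_cat_def, THEN conjunct1] by blast

lemma hom_unique: "f \<in> hom E X Y \<Longrightarrow> f \<in> hom E X' Y' \<Longrightarrow> X = X' \<and> Y = Y'"
  using additive_cat[unfolded additive_cat_def, THEN conjunct2, THEN conjunct1] by blast

lemma id_hom: "X \<in> obj E \<Longrightarrow> idm E X \<in> hom E X X"
  using additive_cat by (simp add: additive_cat_def)

lemma cmp_hom: "f \<in> hom E X Y \<Longrightarrow> g \<in> hom E Y Z \<Longrightarrow> cmp E g f \<in> hom E X Z"
  using additive_cat by (simp add: additive_cat_def)

lemma cmp_assoc: "f \<in> hom E X Y \<Longrightarrow> g \<in> hom E Y Z \<Longrightarrow> h \<in> hom E Z W \<Longrightarrow>
    cmp E h (cmp E g f) = cmp E (cmp E h g) f"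
  using additive_cat by (simp add: additive_cat_def)

lemma cmp_id_left: "f \<in> hom E X Y \<Longrightarrow> cmp E (idm E Y) f = f"
  using additive_cat by (simp add: additive_cat_def)

lemma cmp_id_right: "f \<in> hom E X Y \<Longrightarrow> cmp E f (idm E X) = f"
  using additive_cat by (simp add: additive_cat_def)

lemma hom_abgrp: "X \<in> obj E \<Longrightarrow> Y \<in> obj E \<Longrightarrow> abgrp (hom E X Y) (madd E) (mzero E X Y) (mneg E)"
  using additive_cat by (simp add: additive_cat_def)

lemma cmp_madd_right: "f \<in> hom E X Y \<Longrightarrow> f' \<in> hom E X Y \<Longrightarrow> g \<in> hom E Y Z \<Longrightarrow>
    cmp E g (madd E f f') = madd E (cmp E g f) (cmp E g f')"
  using additive_cat by (simp add: additive_cat_def)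

lemma cmp_madd_left: "f \<in> hom E X Y \<Longrightarrow> g \<in> hom E Y Z \<Longrightarrow> g' \<in> hom E Y Z \<Longrightarrow>
    cmp E (madd E g g') f = madd E (cmp E g f) (cmp E g' f)"
  using additive_cat by (simp add: additive_cat_def)

lemma zero_obj_exists: "\<exists>Z. zero_obj E Z"
  using additive_cat by (simp add: additive_cat_def)

lemma biprod_exists: "X1 \<in> obj E \<Longrightarrow> X2 \<in> obj E \<Longrightarrow> \<exists>S i1 i2 p1 p2. biprod E X1 X2 S i1 i2 p1 p2"
  using additive_cat by (simp add: additive_cat_def)

lemma ext_objs: "d \<in> ext E C A \<Longrightarrow> C \<in> obj E \<and> A \<in> obj E"
  using biadditive_ext[unfolded biadditive_ext_def, THEN conjunct1] by blast

lemma ext_abgrp: "C \<in> obj E \<Longrightarrow> A \<in> obj E \<Longrightarrow> abgrp (ext E C A) (eadd E) (ezero E C A) (eneg E)"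
  using biadditive_ext by (simp add: biadditive_ext_def)

lemma epull_ext: "c \<in> hom E C' C \<Longrightarrow> d \<in> ext E C A \<Longrightarrow> epull E c d \<in> ext E C' A"
  using biadditive_ext by (simp add: biadditive_ext_def)

lemma epush_ext: "a \<in> hom E A A' \<Longrightarrow> d \<in> ext E C A \<Longrightarrow> epush E a d \<in> ext E C A'"
  using biadditive_ext by (simp add: biadditive_ext_def)

lemma epull_id: "d \<in> ext E C A \<Longrightarrow> epull E (idm E C) d = d"
  using biadditive_ext by (simp add: biadditive_ext_def)

lemma epush_id: "d \<in> ext E C A \<Longrightarrow> epush E (idm E A) d = d"
  using biadditive_ext by (simp add: biadditive_ext_def)

lemma epull_cmp: "c' \<in> hom E C'' C' \<Longrightarrow> c \<in> hom E C' C \<Longrightarrow> d \<in> ext E C A \<Longrightarrow>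
    epull E (cmp E c c') d = epull E c' (epull E c d)"
  using biadditive_ext by (simp add: biadditive_ext_def)

lemma epush_cmp: "a \<in> hom E A A' \<Longrightarrow> a' \<in> hom E A' A'' \<Longrightarrow> d \<in> ext E C A \<Longrightarrow>
    epush E (cmp E a' a) d = epush E a' (epush E a d)"
  using biadditive_ext by (simp add: biadditive_ext_def)

lemma epush_epull: "c \<in> hom E C' C \<Longrightarrow> a \<in> hom E A A' \<Longrightarrow> d \<in> ext E C A \<Longrightarrow>
    epush E a (epull E c d) = epull E c (epush E a d)"
  using biadditive_ext by (simp add: biadditive_ext_def)

lemma epull_eadd: "c \<in> hom E C' C \<Longrightarrow> d \<in> ext E C A \<Longrightarrow> d' \<in> ext E C A \<Longrightarrow>
    epull E c (eadd E d d') = eadd E (epull E c d) (epull E c d')"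
  using biadditive_ext by (simp add: biadditive_ext_def)

lemma epush_eadd: "a \<in> hom E A A' \<Longrightarrow> d \<in> ext E C A \<Longrightarrow> d' \<in> ext E C A \<Longrightarrow>
    epush E a (eadd E d d') = eadd E (epush E a d) (epush E a d')"
  using biadditive_ext by (simp add: biadditive_ext_def)

lemma epull_madd: "c \<in> hom E C' C \<Longrightarrow> c' \<in> hom E C' C \<Longrightarrow> d \<in> ext E C A \<Longrightarrow>
    epull E (madd E c c') d = eadd E (epull E c d) (epull E c' d)"
  using biadditive_ext by (simp add: biadditive_ext_def)

lemma epush_madd: "a \<in> hom E A A' \<Longrightarrow> a' \<in> hom E A A' \<Longrightarrow> d \<in> ext E C A \<Longrightarrow>
    epush E (madd E a a') d = eadd E (epush E a d) (epush E a' d)"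
  using biadditive_ext by (simp add: biadditive_ext_def)

lemma realizes_mem: "realizes E d A x B y C \<Longrightarrow> d \<in> ext E C A \<and> x \<in> hom E A B \<and> y \<in> hom E B C"
  by (rule additive_realization[unfolded additive_realization_def, THEN conjunct1, rule_format])

lemma realizes_exists: "d \<in> ext E C A \<Longrightarrow> \<exists>B x y. realizes E d A x B y C"
  by (rule additive_realization[unfolded additive_realization_def, THEN conjunct2, THEN conjunct1,
        rule_format])

lemma realizes_same_ext_iff: "realizes E d A x B y C \<Longrightarrow> realizes E d A' x' B' y' C' \<longleftrightarrow>
    A' = A \<and> C' = C \<and> x' \<in> hom E A B' \<and> y' \<in> hom E B' C \<and>
    (\<exists>b\<in>hom E B B'. is_iso E b \<and> cmp E b x = x' \<and> cmp E y' b = y)"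
  by (rule additive_realization[unfolded additive_realization_def, THEN conjunct2, THEN conjunct2,
        THEN conjunct1, rule_format])

lemma realizes_morphism: "realizes E d A x B y C \<Longrightarrow> realizes E d' A' x' B' y' C' \<Longrightarrow>
    a \<in> hom E A A' \<Longrightarrow> c \<in> hom E C C' \<Longrightarrow> epush E a d = epull E c d' \<Longrightarrow>
    \<exists>b\<in>hom E B B'. cmp E b x = cmp E x' a \<and> cmp E y' b = cmp E c y"
  by (rule additive_realization[unfolded additive_realization_def, THEN conjunct2, THEN conjunct2,
        THEN conjunct2, THEN conjunct1, rule_format])

lemma realizes_split: "biprod E A C S i1 i2 p1 p2 \<Longrightarrow> realizes E (ezero E C A) A i1 S p2 C"
  by (rule additive_realization[unfolded additive_realization_def, THEN conjunct2, THEN conjunct2,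
        THEN conjunct2, THEN conjunct2, THEN conjunct1, rule_format])

lemma realizes_biprod_sum:
  "realizes E d A x B y C \<Longrightarrow> realizes E d' A' x' B' y' C' \<Longrightarrow>
   biprod E A A' SA ia1 ia2 pa1 pa2 \<Longrightarrow> biprod E B B' SB ib1 ib2 pb1 pb2 \<Longrightarrow>
   biprod E C C' SC ic1 ic2 pc1 pc2 \<Longrightarrow> e \<in> ext E SC SA \<Longrightarrow>
   epush E pa1 (epull E ic1 e) = d \<Longrightarrow> epush E pa2 (epull E ic2 e) = d' \<Longrightarrow>
   epush E pa1 (epull E ic2 e) = ezero E C' A \<Longrightarrow> epush E pa2 (epull E ic1 e) = ezero E C A' \<Longrightarrow>
   realizes E e SA (madd E (cmp E ib1 (cmp E x pa1)) (cmp E ib2 (cmp E x' pa2))) SB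
     (madd E (cmp E ic1 (cmp E y pb1)) (cmp E ic2 (cmp E y' pb2))) SC"
  by (rule additive_realization[unfolded additive_realization_def, THEN conjunct2, THEN conjunct2,
        THEN conjunct2, THEN conjunct2, THEN conjunct2, rule_format])

lemma ET3_morphism: "realizes E d A x B y C \<Longrightarrow> realizes E d' A' x' B' y' C' \<Longrightarrow>
    a \<in> hom E A A' \<Longrightarrow> b \<in> hom E B B' \<Longrightarrow> cmp E b x = cmp E x' a \<Longrightarrow>
    \<exists>c\<in>hom E C C'. epush E a d = epull E c d' \<and> cmp E c y = cmp E y' b"
  by (rule ET3[unfolded ET3_def, rule_format])

lemma ET4_octahedron:
  assumes "realizes E d A f B f' D" and "realizes E d' B g C g' F"
  obtains Eo h' dd e d'' where "realizes E d'' A (cmp E g f) C h' Eo"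
    and "realizes E (epush E f' d') D dd Eo e F"
  using ET4[unfolded ET4_def, rule_format, OF assms] by blast

lemma ET4op_octahedron:
  assumes "realizes E d D f' B f A" and "realizes E d' F g' C g B"
  obtains Eo h' dd e d'' where "realizes E d'' Eo h' C (cmp E f g) A"
    and "realizes E (epull E f' d') F e Eo dd D"
  using ET4op[unfolded ET4op_def, rule_format, OF assms] by blast

lemma WIC_inflation: "f \<in> hom E X Y \<Longrightarrow> g \<in> hom E Y Z \<Longrightarrow> inflation E (cmp E g f) \<Longrightarrow> inflation E f"
  using WIC by (simp add: WIC_def)

lemma realizes_objs: "realizes E d A x B y C \<Longrightarrow> A \<in> obj E \<and> B \<in> obj E \<and> C \<in> obj E"
  using realizes_mem hom_objs by blast

lemma mzero_hom: "X \<in> obj E \<Longrightarrow> Y \<in> obj E \<Longrightarrow> mzero E X Y \<in> hom E X Y"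
  using hom_abgrp abgrp_zero_mem by metis

lemma madd_hom: "f \<in> hom E X Y \<Longrightarrow> g \<in> hom E X Y \<Longrightarrow> madd E f g \<in> hom E X Y"
  using hom_abgrp abgrp_add_mem hom_objs by metis

lemma mneg_hom: "f \<in> hom E X Y \<Longrightarrow> mneg E f \<in> hom E X Y"
  using hom_abgrp abgrp_neg_mem hom_objs by metis

lemma madd_zero_left: "f \<in> hom E X Y \<Longrightarrow> madd E (mzero E X Y) f = f"
  using hom_abgrp abgrp_zero_left hom_objs by metis

lemma madd_zero_right: "f \<in> hom E X Y \<Longrightarrow> madd E f (mzero E X Y) = f"
  using hom_abgrp abgrp_zero_right hom_objs by metis

lemma madd_commute: "f \<in> hom E X Y \<Longrightarrow> g \<in> hom E X Y \<Longrightarrow> madd E f g = madd E g f"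
  using hom_abgrp abgrp_commute hom_objs by metis

lemma madd_assoc: "f \<in> hom E X Y \<Longrightarrow> g \<in> hom E X Y \<Longrightarrow> h \<in> hom E X Y \<Longrightarrow>
    madd E (madd E f g) h = madd E f (madd E g h)"
  using hom_abgrp abgrp_assoc hom_objs by metis

lemma madd_neg_right: "f \<in> hom E X Y \<Longrightarrow> madd E f (mneg E f) = mzero E X Y"
  using hom_abgrp abgrp_neg_right hom_objs by metis

lemma madd_neg_left: "f \<in> hom E X Y \<Longrightarrow> madd E (mneg E f) f = mzero E X Y"
  using hom_abgrp abgrp_neg_left hom_objs by metis

lemma madd_idem_eq_zero: "f \<in> hom E X Y \<Longrightarrow> madd E f f = f \<Longrightarrow> f = mzero E X Y"
  using hom_abgrp abgrp_idem_eq_zero hom_objs by metis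

lemma mneg_unique: "f \<in> hom E X Y \<Longrightarrow> g \<in> hom E X Y \<Longrightarrow> madd E f g = mzero E X Y \<Longrightarrow> g = mneg E f"
  using hom_abgrp abgrp_neg_unique hom_objs by metis

lemma mneg_mzero: "X \<in> obj E \<Longrightarrow> Y \<in> obj E \<Longrightarrow> mneg E (mzero E X Y) = mzero E X Y"
  using hom_abgrp abgrp_neg_zero by metis

lemma cmp_mzero_left:
  assumes f: "f \<in> hom E X Y" and Z: "Z \<in> obj E"
  shows "cmp E (mzero E Y Z) f = mzero E X Z"
proof -
  have z: "mzero E Y Z \<in> hom E Y Z" using mzero_hom hom_objs f Z by blast
  have "cmp E (mzero E Y Z) f = cmp E (madd E (mzero E Y Z) (mzero E Y Z)) f"
    using madd_zero_left z by simp
  also have "\<dots> = madd E (cmp E (mzero E Y Z) f) (cmp E (mzero E Y Z) f)"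
    using cmp_madd_left f z by blast
  finally show ?thesis using madd_idem_eq_zero cmp_hom f z by metis
qed

lemma cmp_mzero_right:
  assumes g: "g \<in> hom E Y Z" and X: "X \<in> obj E"
  shows "cmp E g (mzero E X Y) = mzero E X Z"
proof -
  have z: "mzero E X Y \<in> hom E X Y" using mzero_hom hom_objs g X by blast
  have "cmp E g (mzero E X Y) = cmp E g (madd E (mzero E X Y) (mzero E X Y))"
    using madd_zero_left z by simp
  also have "\<dots> = madd E (cmp E g (mzero E X Y)) (cmp E g (mzero E X Y))"
    using cmp_madd_right g z by blast
  finally show ?thesis using madd_idem_eq_zero cmp_hom g z by metis
qed

lemma cmp_mneg_left:
  assumes f: "f \<in> hom E X Y" and g: "g \<in> hom E Y Z"
  shows "cmp E (mneg E g) f = mneg E (cmp E g f)"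
proof -
  have ng: "mneg E g \<in> hom E Y Z" using mneg_hom g by auto
  have "madd E (cmp E g f) (cmp E (mneg E g) f) = cmp E (madd E g (mneg E g)) f"
    using cmp_madd_left f g ng by simp
  also have "\<dots> = mzero E X Z" using madd_neg_right g cmp_mzero_left f hom_objs by metis
  finally show ?thesis using mneg_unique cmp_hom f g ng by metis
qed

lemma cmp_mneg_right:
  assumes f: "f \<in> hom E X Y" and g: "g \<in> hom E Y Z"
  shows "cmp E g (mneg E f) = mneg E (cmp E g f)"
proof -
  have nf: "mneg E f \<in> hom E X Y" using mneg_hom f by auto
  have "madd E (cmp E g f) (cmp E g (mneg E f)) = cmp E g (madd E f (mneg E f))"
    using cmp_madd_right f g nf by simp
  also have "\<dots> = mzero E X Z" using madd_neg_right f cmp_mzero_right g hom_objs by metis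
  finally show ?thesis using mneg_unique cmp_hom f g nf by metis
qed

lemma zero_obj_mem: "zero_obj E Z \<Longrightarrow> Z \<in> obj E"
  by (simp add: zero_obj_def)

lemma zero_obj_hom_from:
  assumes Z: "zero_obj E Z" and f: "f \<in> hom E Z X"
  shows "f = mzero E Z X"
proof -
  have "f = cmp E f (idm E Z)" using cmp_id_right f by simp
  also have "\<dots> = cmp E f (mzero E Z Z)" using Z by (simp add: zero_obj_def)
  also have "\<dots> = mzero E Z X" using cmp_mzero_right f Z zero_obj_mem by blast
  finally show ?thesis .
qed

lemma is_isoI:
  "f \<in> hom E X Y \<Longrightarrow> g \<in> hom E Y X \<Longrightarrow> cmp E g f = idm E X \<Longrightarrow> cmp E f g = idm E Y \<Longrightarrow> is_iso E f"
  unfolding is_iso_def by blast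

lemma iso_inverse:
  assumes f: "f \<in> hom E X Y" and "is_iso E f"
  obtains g where "g \<in> hom E Y X" "is_iso E g" "cmp E g f = idm E X" "cmp E f g = idm E Y"
proof -
  obtain g where "g \<in> hom E Y X" "cmp E g f = idm E X" "cmp E f g = idm E Y"
    using assms hom_unique unfolding is_iso_def by metis
  then show ?thesis using that is_isoI[of g Y X f] f by blast
qed

lemma id_is_iso: "X \<in> obj E \<Longrightarrow> is_iso E (idm E X)"
  using is_isoI id_hom cmp_id_left by metis

lemma is_iso_left_right_inverse:
  assumes f: "f \<in> hom E X Y" and g: "g \<in> hom E Y X" and h: "h \<in> hom E Y X"
    and gf: "cmp E g f = idm E X" and fh: "cmp E f h = idm E Y"
  shows "is_iso E f"
proof -
  have "g = cmp E g (cmp E f h)" using cmp_id_right g fh by simp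
  also have "\<dots> = h" using cmp_assoc h f g gf cmp_id_left h by simp
  finally show ?thesis using is_isoI f g gf fh by simp
qed

lemma is_iso_of_cmp_isos:
  assumes g: "g \<in> hom E Y X" and b: "b \<in> hom E X Y"
    and "is_iso E (cmp E g b)" and "is_iso E (cmp E b g)"
  shows "is_iso E g"
proof -
  obtain u where u: "u \<in> hom E X X" "cmp E (cmp E g b) u = idm E X"
    using iso_inverse cmp_hom g b assms(3) by metis
  obtain v where v: "v \<in> hom E Y Y" "cmp E v (cmp E b g) = idm E Y"
    using iso_inverse cmp_hom g b assms(4) by metis
  have "cmp E g (cmp E b u) = idm E X" using cmp_assoc[OF u(1) b g] u by simp
  moreover have "cmp E (cmp E v b) g = idm E Y" using cmp_assoc[OF g b v(1)] v by simp
  ultimately show ?thesis using is_iso_left_right_inverse g cmp_hom u(1) v(1) b by blast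
qed

lemma ezero_ext: "C \<in> obj E \<Longrightarrow> A \<in> obj E \<Longrightarrow> ezero E C A \<in> ext E C A"
  using ext_abgrp abgrp_zero_mem by metis

lemma eadd_ext: "d \<in> ext E C A \<Longrightarrow> d' \<in> ext E C A \<Longrightarrow> eadd E d d' \<in> ext E C A"
  using ext_abgrp abgrp_add_mem ext_objs by metis

lemma eadd_zero_right: "d \<in> ext E C A \<Longrightarrow> eadd E d (ezero E C A) = d"
  using ext_abgrp abgrp_zero_right ext_objs by metis

lemma eadd_idem_eq_zero: "d \<in> ext E C A \<Longrightarrow> eadd E d d = d \<Longrightarrow> d = ezero E C A"
  using ext_abgrp abgrp_idem_eq_zero ext_objs by metis

lemma eadd_zero_left: "d \<in> ext E C A \<Longrightarrow> eadd E (ezero E C A) d = d"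
  using ext_abgrp abgrp_zero_left ext_objs by metis

lemma epull_ezero:
  assumes c: "c \<in> hom E C' C" and A: "A \<in> obj E"
  shows "epull E c (ezero E C A) = ezero E C' A"
proof -
  have z: "ezero E C A \<in> ext E C A" using ezero_ext hom_objs c A by blast
  have "epull E c (ezero E C A) = eadd E (epull E c (ezero E C A)) (epull E c (ezero E C A))"
    using eadd_zero_left z epull_eadd c by metis
  then show ?thesis using eadd_idem_eq_zero epull_ext c z by metis
qed

lemma epush_mzero:
  assumes d: "d \<in> ext E C A" and A': "A' \<in> obj E"
  shows "epush E (mzero E A A') d = ezero E C A'"
proof -
  have z: "mzero E A A' \<in> hom E A A'" using mzero_hom ext_objs d A' by blast
  have "epush E (mzero E A A') d = eadd E (epush E (mzero E A A') d) (epush E (mzero E A A') d)"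
    using madd_zero_left z epush_madd d by metis
  then show ?thesis using eadd_idem_eq_zero epush_ext z d by metis
qed

lemma epull_mzero:
  assumes d: "d \<in> ext E C A" and C': "C' \<in> obj E"
  shows "epull E (mzero E C' C) d = ezero E C' A"
proof -
  have z: "mzero E C' C \<in> hom E C' C" using mzero_hom ext_objs d C' by blast
  have "epull E (mzero E C' C) d = eadd E (epull E (mzero E C' C) d) (epull E (mzero E C' C) d)"
    using madd_zero_left z epull_madd d by metis
  then show ?thesis using eadd_idem_eq_zero epull_ext z d by metis
qed

lemma biprod_zero:
  assumes A: "A \<in> obj E" and Z: "zero_obj E Z"
  shows "biprod E A Z A (idm E A) (mzero E Z A) (idm E A) (mzero E A Z)"
proof -
  have Zo: "Z \<in> obj E" using Z zero_obj_mem by auto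
  have h: "idm E A \<in> hom E A A" "mzero E Z A \<in> hom E Z A" "mzero E A Z \<in> hom E A Z"
    using id_hom mzero_hom A Zo by auto
  have "cmp E (mzero E A Z) (mzero E Z A) = idm E Z"
    using cmp_mzero_right h Zo Z by (simp add: zero_obj_def)
  moreover have "madd E (cmp E (idm E A) (idm E A)) (cmp E (mzero E Z A) (mzero E A Z)) = idm E A"
    using cmp_mzero_right[OF h(2) A] cmp_id_left h madd_zero_right by simp
  ultimately show ?thesis
    unfolding biprod_def using A h cmp_id_left cmp_id_right by auto
qed

lemma biprod_swap: "biprod E X1 X2 S i1 i2 p1 p2 \<Longrightarrow> biprod E X2 X1 S i2 i1 p2 p1"
  unfolding biprod_def using madd_commute cmp_hom by metis

lemma realizes_id_zero: "A \<in> obj E \<Longrightarrow> zero_obj E Z \<Longrightarrow> realizes E (ezero E Z A) A (idm E A) A (mzero E A Z) Z"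
  using realizes_split biprod_zero by blast

lemma realizes_zero_id: "B \<in> obj E \<Longrightarrow> zero_obj E Z \<Longrightarrow> realizes E (ezero E B Z) Z (mzero E Z B) B (idm E B) B"
  using realizes_split biprod_swap biprod_zero by blast

lemma realizes_cmp_zero:
  assumes T: "realizes E d A x B y C"
  shows "cmp E y x = mzero E A C"
proof -
  obtain Z where Z: "zero_obj E Z" using zero_obj_exists by blast
  have x: "x \<in> hom E A B" and y: "y \<in> hom E B C" using realizes_mem T by auto
  have A: "A \<in> obj E" using hom_objs x by auto
  obtain c where "c \<in> hom E Z C" "cmp E c (mzero E A Z) = cmp E y x"
    using ET3_morphism[OF realizes_id_zero[OF A Z] T id_hom[OF A] x] by auto
  then show ?thesis using cmp_mzero_right A by metis
qed

lemma epull_deflation_zero: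
  assumes T: "realizes E d A x B y C"
  shows "epull E y d = ezero E B A"
proof -
  have d: "d \<in> ext E C A" and x: "x \<in> hom E A B" and y: "y \<in> hom E B C" using realizes_mem T by auto
  have A: "A \<in> obj E" and B: "B \<in> obj E" using hom_objs x by auto
  obtain S i1 i2 p1 p2 where bp: "biprod E A B S i1 i2 p1 p2" using biprod_exists A B by blast
  have h: "i1 \<in> hom E A S" "i2 \<in> hom E B S" "p1 \<in> hom E S A" "p2 \<in> hom E S B"
    "cmp E p1 i1 = idm E A" "cmp E p2 i2 = idm E B" "cmp E p2 i1 = mzero E A B"
    "cmp E p1 i2 = mzero E B A" using bp unfolding biprod_def by auto
  define b where "b = madd E (cmp E x p1) p2"
  have xp: "cmp E x p1 \<in> hom E S B" using cmp_hom h x by blast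
  have b: "b \<in> hom E S B" unfolding b_def using madd_hom xp h by blast
  have "cmp E b i1 = madd E (cmp E x (cmp E p1 i1)) (cmp E p2 i1)"
    unfolding b_def using cmp_madd_left h xp cmp_assoc[OF h(1) h(3) x] by simp
  then have bi1: "cmp E b i1 = cmp E x (idm E A)" using h madd_zero_right x cmp_id_right by simp
  have "cmp E b i2 = madd E (cmp E x (cmp E p1 i2)) (cmp E p2 i2)"
    unfolding b_def using cmp_madd_left h xp cmp_assoc[OF h(2) h(3) x] by simp
  then have bi2: "cmp E b i2 = idm E B"
    using h cmp_mzero_right[OF x B] madd_zero_left id_hom[OF B] by simp
  \<comment> \<open>ET3 applied to the split triangle A -> A + B -> B and the map b = (x, 1)\<close>
  obtain c where c: "c \<in> hom E B C" "epush E (idm E A) (ezero E B A) = epull E c d"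
    "cmp E c p2 = cmp E y b"
    using ET3_morphism[OF realizes_split[OF bp] T id_hom[OF A] b bi1] by blast
  have "c = cmp E (cmp E c p2) i2" using h c cmp_assoc[OF h(2) h(4) c(1)] cmp_id_right by simp
  also have "\<dots> = y" using c cmp_assoc[OF h(2) b y] bi2 cmp_id_right y by simp
  finally show ?thesis using c epush_id ezero_ext A B by metis
qed

lemma factor_through_deflation:
  assumes T: "realizes E d A x B y C" and p: "p \<in> hom E B X" and px: "cmp E p x = mzero E A X"
  obtains q where "q \<in> hom E C X" "cmp E q y = p"
proof -
  obtain Z where Z: "zero_obj E Z" using zero_obj_exists by blast
  have Zo: "Z \<in> obj E" using Z zero_obj_mem by auto
  have x: "x \<in> hom E A B" using realizes_mem T by auto
  have X: "X \<in> obj E" and A: "A \<in> obj E" using hom_objs x p by auto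
  have "cmp E p x = cmp E (mzero E Z X) (mzero E A Z)"
    using px cmp_mzero_right mzero_hom Zo A X by metis
  then obtain q where "q \<in> hom E C X" "cmp E q y = cmp E (idm E X) p"
    using ET3_morphism[OF T realizes_zero_id[OF X Z] mzero_hom[OF A Zo] p] by blast
  then show ?thesis using that cmp_id_left p by auto
qed

lemma id_plus_square_zero_is_iso:
  assumes \<delta>: "\<delta> \<in> hom E B B" and \<delta>\<delta>: "cmp E \<delta> \<delta> = mzero E B B"
  shows "is_iso E (madd E (idm E B) \<delta>)"
proof -
  define I where "I = idm E B"
  define \<phi> where "\<phi> = madd E I \<delta>"
  define \<nu> where "\<nu> = madd E I (mneg E \<delta>)"
  have B: "B \<in> obj E" using hom_objs \<delta> by auto
  have I: "I \<in> hom E B B" unfolding I_def using id_hom B by auto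
  have n\<delta>: "mneg E \<delta> \<in> hom E B B" using mneg_hom \<delta> by auto
  have \<phi>: "\<phi> \<in> hom E B B" and \<nu>: "\<nu> \<in> hom E B B" unfolding \<phi>_def \<nu>_def using madd_hom I \<delta> n\<delta> by auto
  have \<phi>\<delta>: "cmp E \<phi> \<delta> = \<delta>"
    unfolding \<phi>_def using cmp_madd_left[OF \<delta> I \<delta>] cmp_id_left \<delta> \<delta>\<delta> madd_zero_right unfolding I_def by simp
  have \<nu>\<delta>: "cmp E \<nu> \<delta> = \<delta>"
    unfolding \<nu>_def using cmp_madd_left[OF \<delta> I n\<delta>] cmp_id_left \<delta> cmp_mneg_left[OF \<delta> \<delta>] \<delta>\<delta>
      mneg_mzero B madd_zero_right unfolding I_def by simp
  have "cmp E \<phi> \<nu> = madd E \<phi> (mneg E \<delta>)"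
    unfolding \<nu>_def using cmp_madd_right[OF I n\<delta> \<phi>] cmp_id_right \<phi> cmp_mneg_right[OF \<delta> \<phi>] \<phi>\<delta>
    unfolding I_def by simp
  also have "\<dots> = I" unfolding \<phi>_def using madd_assoc I \<delta> n\<delta> madd_neg_right madd_zero_right by simp
  finally have \<phi>\<nu>: "cmp E \<phi> \<nu> = I" .
  have "cmp E \<nu> \<phi> = madd E \<nu> \<delta>"
    unfolding \<phi>_def using cmp_madd_right[OF I \<delta> \<nu>] cmp_id_right \<nu> \<nu>\<delta> unfolding I_def by simp
  also have "\<dots> = I" unfolding \<nu>_def using madd_assoc I \<delta> n\<delta> madd_neg_left madd_zero_right by simp
  finally have "cmp E \<nu> \<phi> = I" .
  then show ?thesis using is_isoI[OF \<phi> \<nu>] \<phi>\<nu> unfolding \<phi>_def I_def by blast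
qed

lemma endo_fixing_triangle_is_iso:
  assumes T: "realizes E d A x B y C" and \<phi>: "\<phi> \<in> hom E B B"
    and \<phi>x: "cmp E \<phi> x = x" and y\<phi>: "cmp E y \<phi> = y"
  shows "is_iso E \<phi>"
proof -
  have x: "x \<in> hom E A B" and y: "y \<in> hom E B C" using realizes_mem T by auto
  have B: "B \<in> obj E" using hom_objs \<phi> by auto
  define I where "I = idm E B"
  have I: "I \<in> hom E B B" unfolding I_def using id_hom B by auto
  have nI: "mneg E I \<in> hom E B B" using mneg_hom I by auto
  define \<delta> where "\<delta> = madd E \<phi> (mneg E I)"
  have \<delta>: "\<delta> \<in> hom E B B" unfolding \<delta>_def using madd_hom \<phi> nI by auto
  have "cmp E \<delta> x = madd E x (mneg E x)"
    unfolding \<delta>_def using cmp_madd_left[OF x \<phi> nI] cmp_mneg_left[OF x I] cmp_id_left x \<phi>x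
    unfolding I_def by simp
  then have \<delta>x: "cmp E \<delta> x = mzero E A B" using madd_neg_right x by simp
  have "cmp E y \<delta> = madd E y (mneg E y)"
    unfolding \<delta>_def using cmp_madd_right[OF \<phi> nI y] cmp_mneg_right[OF I y] cmp_id_right y y\<phi>
    unfolding I_def by simp
  then have y\<delta>: "cmp E y \<delta> = mzero E B C" using madd_neg_right y by simp
  \<comment> \<open>\<phi> - 1 kills x and is killed by y, so it factors through y and squares to zero\<close>
  obtain \<psi> where \<psi>: "\<psi> \<in> hom E C B" "cmp E \<psi> y = \<delta>" using factor_through_deflation[OF T \<delta> \<delta>x] .
  have "cmp E \<delta> \<delta> = mzero E B B"
    using \<psi> cmp_assoc[OF \<delta> y \<psi>(1)] y\<delta> cmp_mzero_right[OF \<psi>(1) B] by metis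
  moreover have "madd E I \<delta> = \<phi>"
    unfolding \<delta>_def using madd_commute[OF I] madd_assoc[OF \<phi> nI I] madd_neg_left I madd_zero_right \<phi>
      madd_hom[OF \<phi> nI] by metis
  ultimately show ?thesis using id_plus_square_zero_is_iso[OF \<delta>] unfolding I_def by simp
qed

lemma realizes_iso_ends_iso_middle:
  assumes T: "realizes E d A x B y C" and T': "realizes E d' A' x' B' y' C'"
    and a: "a \<in> hom E A A'" "is_iso E a" and c: "c \<in> hom E C C'" "is_iso E c"
    and ac: "epush E a d = epull E c d'"
  obtains b where "b \<in> hom E B B'" "is_iso E b" "cmp E b x = cmp E x' a" "cmp E y' b = cmp E c y"
proof -
  have m: "d \<in> ext E C A" "x \<in> hom E A B" "y \<in> hom E B C" using realizes_mem T by auto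
  have m': "d' \<in> ext E C' A'" "x' \<in> hom E A' B'" "y' \<in> hom E B' C'" using realizes_mem T' by auto
  obtain \<beta> where \<beta>: "\<beta> \<in> hom E B B'" "cmp E \<beta> x = cmp E x' a" "cmp E y' \<beta> = cmp E c y"
    using realizes_morphism[OF T T' a(1) c(1) ac] by blast
  obtain a' where a': "a' \<in> hom E A' A" "cmp E a' a = idm E A" "cmp E a a' = idm E A'"
    using iso_inverse a by blast
  obtain c' where c': "c' \<in> hom E C' C" "cmp E c' c = idm E C" "cmp E c c' = idm E C'"
    using iso_inverse c by blast
  have "epush E a' d' = epush E a' (epull E (cmp E c c') d')" using c' epull_id m' by simp
  also have "\<dots> = epull E c' (epush E a' (epull E c d'))"
    using epull_cmp[OF c'(1) c(1) m'(1)] epush_epull[OF c'(1) a'(1) epull_ext[OF c(1) m'(1)]] by simp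
  also have "\<dots> = epull E c' d"
    using ac epush_cmp[OF a(1) a'(1) m(1)] a' epush_id m by simp
  finally obtain \<gamma> where \<gamma>: "\<gamma> \<in> hom E B' B" "cmp E \<gamma> x' = cmp E x a'" "cmp E y \<gamma> = cmp E c' y'"
    using realizes_morphism[OF T' T a'(1) c'(1)] by blast
  have \<gamma>\<beta>: "cmp E \<gamma> \<beta> \<in> hom E B B" and \<beta>\<gamma>: "cmp E \<beta> \<gamma> \<in> hom E B' B'" using cmp_hom \<beta> \<gamma> by auto
  have "cmp E (cmp E \<gamma> \<beta>) x = x"
    using cmp_assoc[OF m(2) \<beta>(1) \<gamma>(1)] \<beta> cmp_assoc[OF a(1) m'(2) \<gamma>(1)] \<gamma>
      cmp_assoc[OF a(1) a'(1) m(2)] a' cmp_id_right m by simp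
  moreover have "cmp E y (cmp E \<gamma> \<beta>) = y"
    using cmp_assoc[OF \<beta>(1) \<gamma>(1) m(3)] \<gamma> cmp_assoc[OF \<beta>(1) m'(3) c'(1)] \<beta>
      cmp_assoc[OF m(3) c(1) c'(1)] c' cmp_id_left m by simp
  moreover have "cmp E (cmp E \<beta> \<gamma>) x' = x'"
    using cmp_assoc[OF m'(2) \<gamma>(1) \<beta>(1)] \<gamma> cmp_assoc[OF a'(1) m(2) \<beta>(1)] \<beta>
      cmp_assoc[OF a'(1) a(1) m'(2)] a' cmp_id_right m' by simp
  moreover have "cmp E y' (cmp E \<beta> \<gamma>) = y'"
    using cmp_assoc[OF \<gamma>(1) \<beta>(1) m'(3)] \<beta> cmp_assoc[OF \<gamma>(1) m(3) c(1)] \<gamma>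
      cmp_assoc[OF m'(3) c'(1) c(1)] c' cmp_id_left m' by simp
  ultimately have "is_iso E \<beta>"
    using is_iso_of_cmp_isos[OF \<beta>(1) \<gamma>(1)] endo_fixing_triangle_is_iso T T' \<gamma>\<beta> \<beta>\<gamma> by blast
  then show ?thesis using that \<beta> by blast
qed

lemma realizes_cmp_iso_right:
  assumes T: "realizes E d A x B y C" and a: "a \<in> hom E A' A" "is_iso E a"
  obtains d' where "realizes E d' A' (cmp E x a) B y C"
proof -
  have m: "d \<in> ext E C A" "x \<in> hom E A B" "y \<in> hom E B C" using realizes_mem T by auto
  have C: "C \<in> obj E" using hom_objs m by auto
  obtain a' where a': "a' \<in> hom E A A'" "cmp E a a' = idm E A" using iso_inverse a by blast
  have d': "epush E a' d \<in> ext E C A'" using epush_ext a' m by auto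
  obtain B' x' y' where T': "realizes E (epush E a' d) A' x' B' y' C" using realizes_exists d' by blast
  have "epush E a (epush E a' d) = epull E (idm E C) d"
    using epush_cmp[OF a'(1) a(1) m(1)] a' epush_id epull_id m by simp
  then obtain b where b: "b \<in> hom E B' B" "is_iso E b" "cmp E b x' = cmp E x a"
      "cmp E y b = cmp E (idm E C) y'"
    using realizes_iso_ends_iso_middle[OF T' T a id_hom[OF C] id_is_iso[OF C]] by blast
  have "realizes E (epush E a' d) A' (cmp E x a) B y C"
    using realizes_same_ext_iff[OF T'] b cmp_hom[OF a(1) m(2)] m cmp_id_left realizes_mem[OF T'] by auto
  then show ?thesis using that by blast
qed

lemma realizes_cmp_iso_left:
  assumes T: "realizes E d A x B y C" and c: "c \<in> hom E C C'" "is_iso E c"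
  obtains d' where "realizes E d' A x B (cmp E c y) C'"
proof -
  have m: "d \<in> ext E C A" "x \<in> hom E A B" "y \<in> hom E B C" using realizes_mem T by auto
  have A: "A \<in> obj E" using hom_objs m by auto
  obtain c' where c': "c' \<in> hom E C' C" "is_iso E c'" "cmp E c c' = idm E C'"
    using iso_inverse c by blast
  have d': "epull E c' d \<in> ext E C' A" using epull_ext c' m by auto
  obtain B' x' y' where T': "realizes E (epull E c' d) A x' B' y' C'" using realizes_exists d' by blast
  obtain b where b: "b \<in> hom E B' B" "is_iso E b" "cmp E b x' = cmp E x (idm E A)"
      "cmp E y b = cmp E c' y'"
    using realizes_iso_ends_iso_middle[OF T' T id_hom[OF A] id_is_iso[OF A] c'(1,2)] epush_id d' by metis
  have m': "x' \<in> hom E A B'" "y' \<in> hom E B' C'" using realizes_mem T' by auto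
  have "cmp E (cmp E c y) b = y'"
    using cmp_assoc[OF b(1) m(3) c(1)] b cmp_assoc[OF m'(2) c'(1) c(1)] c' cmp_id_left m' by simp
  then have "realizes E (epull E c' d) A x B (cmp E c y) C'"
    using realizes_same_ext_iff[OF T'] b cmp_hom[OF m(3) c(1)] m cmp_id_right by auto
  then show ?thesis using that by blast
qed

lemma inflation_cmp_iso_right:
  assumes f: "inflation E f" "f \<in> hom E X Y" and a: "a \<in> hom E X' X" "is_iso E a"
  shows "inflation E (cmp E f a)"
proof -
  obtain d A B y C where T: "realizes E d A f B y C" using f unfolding inflation_def by blast
  then have "A = X" using realizes_mem hom_unique f by blast
  then show ?thesis using realizes_cmp_iso_right[OF T] a unfolding inflation_def by metis
qed

lemma inflation_cmp_iso_left:
  assumes f: "inflation E f" "f \<in> hom E X Y" and b: "b \<in> hom E Y Y'" "is_iso E b"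
  shows "inflation E (cmp E b f)"
proof -
  obtain d A B y C where T: "realizes E d A f B y C" using f unfolding inflation_def by blast
  have y: "y \<in> hom E B C" and "A = X \<and> B = Y" using realizes_mem T hom_unique f by blast+
  then have T: "realizes E d X f Y y C" using T by simp
  obtain b' where b': "b' \<in> hom E Y' Y" "cmp E b' b = idm E Y" using iso_inverse b by blast
  have "cmp E (cmp E y b') b = y"
    using cmp_assoc[OF b(1) b'(1)] b' cmp_id_right \<open>A = X \<and> B = Y\<close> y by simp
  then have "realizes E d X (cmp E b f) Y' (cmp E y b') C"
    using realizes_same_ext_iff[OF T] b cmp_hom b'(1) f(2) \<open>A = X \<and> B = Y\<close> y by auto
  then show ?thesis unfolding inflation_def by blast
qed

lemma split_realizes_biprod:
  assumes T: "realizes E (ezero E C A) A x B y C"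
  obtains s r where "biprod E A C B x s r y"
proof -
  have x: "x \<in> hom E A B" and y: "y \<in> hom E B C" using realizes_mem T by auto
  have A: "A \<in> obj E" and B: "B \<in> obj E" and C: "C \<in> obj E" using hom_objs x y by auto
  obtain S i1 i2 p1 p2 where bp: "biprod E A C S i1 i2 p1 p2" using biprod_exists A C by blast
  have h: "i1 \<in> hom E A S" "i2 \<in> hom E C S" "p1 \<in> hom E S A" "p2 \<in> hom E S C"
    "cmp E p1 i1 = idm E A" "cmp E p2 i2 = idm E C" "cmp E p2 i1 = mzero E A C" "cmp E p1 i2 = mzero E C A"
    "madd E (cmp E i1 p1) (cmp E i2 p2) = idm E S" using bp unfolding biprod_def by auto
  obtain b where b: "b \<in> hom E S B" "is_iso E b" "cmp E b i1 = x" "cmp E y b = p2"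
    using realizes_same_ext_iff[OF realizes_split[OF bp]] T by blast
  obtain b' where b': "b' \<in> hom E B S" "cmp E b' b = idm E S" "cmp E b b' = idm E B"
    using iso_inverse b by blast
  define s where "s = cmp E b i2"
  define r where "r = cmp E p1 b'"
  have s: "s \<in> hom E C B" and r: "r \<in> hom E B A" unfolding s_def r_def using cmp_hom h b b' by auto
  have b'b: "cmp E b' (cmp E b f) = f" if "f \<in> hom E X S" for X f
    using cmp_assoc[OF that b(1) b'(1)] b'(2) cmp_id_left[OF that] by simp
  have rb: "cmp E r (cmp E b f) = cmp E p1 f" if "f \<in> hom E X S" for X f
    unfolding r_def using cmp_assoc[OF cmp_hom[OF that b(1)] b'(1) h(3)] b'b[OF that] by simp
  have "cmp E r x = idm E A" and "cmp E r s = mzero E C A"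
    unfolding s_def using rb h b(3) by auto
  moreover have "cmp E y s = idm E C"
    unfolding s_def using cmp_assoc[OF h(2) b(1) y] b h by simp
  moreover have "cmp E y x = mzero E A C" using realizes_cmp_zero[OF T] .
  moreover have "madd E (cmp E x r) (cmp E s y) = idm E B"
  proof -
    have yb': "y = cmp E p2 b'" using cmp_assoc[OF b'(1) b(1) y] b b' cmp_id_right y by metis
    have ip: "cmp E i1 p1 \<in> hom E S S" "cmp E i2 p2 \<in> hom E S S" using cmp_hom h by auto
    have "cmp E x r = cmp E b (cmp E (cmp E i1 p1) b')"
      unfolding r_def using b(3) cmp_assoc[OF cmp_hom[OF b'(1) h(3)] h(1) b(1)] cmp_assoc[OF b'(1) h(3) h(1)]
      by simp
    moreover have "cmp E s y = cmp E b (cmp E (cmp E i2 p2) b')"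
      unfolding s_def using yb' cmp_assoc[OF cmp_hom[OF b'(1) h(4)] h(2) b(1)] cmp_assoc[OF b'(1) h(4) h(2)]
      by simp
    ultimately have "madd E (cmp E x r) (cmp E s y) = cmp E b (cmp E (idm E S) b')"
      using cmp_madd_right[OF cmp_hom[OF b'(1) ip(1)] cmp_hom[OF b'(1) ip(2)] b(1)]
        cmp_madd_left[OF b'(1) ip] h(9) by simp
    then show ?thesis using cmp_id_left b' by simp
  qed
  ultimately have "biprod E A C B x s r y" unfolding biprod_def using B x y s r by auto
  then show ?thesis using that by blast
qed

lemma zero_obj_cocone_of_iso:
  assumes T: "realizes E d L u M v N" and v: "is_iso E v"
  shows "zero_obj E L"
proof -
  have m: "d \<in> ext E N L" "u \<in> hom E L M" "v \<in> hom E M N" using realizes_mem T by auto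
  have L: "L \<in> obj E" using hom_objs m by auto
  obtain v' where v': "v' \<in> hom E N M" "cmp E v' v = idm E M" "cmp E v v' = idm E N"
    using iso_inverse m(3) v by blast
  have "u = cmp E v' (cmp E v u)" using cmp_assoc[OF m(2) m(3) v'(1)] v' cmp_id_left m by simp
  then have u0: "u = mzero E L M" using realizes_cmp_zero[OF T] cmp_mzero_right[OF v'(1) L] by simp
  have "d = epull E v' (epull E v d)" using epull_cmp[OF v'(1) m(3) m(1)] v' epull_id m by simp
  then have "d = ezero E N L" using epull_deflation_zero[OF T] epull_ezero v'(1) L by simp
  then obtain s r where "biprod E L N M u s r v" using split_realizes_biprod T by metis
  then have "r \<in> hom E M L" "cmp E r u = idm E L" unfolding biprod_def by auto
  then have "idm E L = mzero E L L" using u0 cmp_mzero_right L by metis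
  then show ?thesis using L unfolding zero_obj_def by simp
qed

lemma projective_mem: "projective E P \<Longrightarrow> P \<in> obj E"
  by (simp add: projective_def)

lemma ext_projective_eq_zero:
  assumes P: "projective E P" and d: "d \<in> ext E P A"
  shows "d = ezero E P A"
proof -
  obtain B x y where T: "realizes E d A x B y P" using realizes_exists d by blast
  have y: "y \<in> hom E B P" using realizes_mem T by auto
  have Po: "P \<in> obj E" and A: "A \<in> obj E" using ext_objs d by auto
  obtain s where s: "s \<in> hom E P B" "cmp E y s = idm E P"
    using P id_hom[OF Po] T unfolding projective_def by blast
  have "d = epull E s (epull E y d)" using epull_cmp[OF s(1) y d] s epull_id d by simp
  then show ?thesis using epull_deflation_zero[OF T] epull_ezero s A by simp
qed

lemma realizes_projective_biprod:
  assumes "realizes E \<theta> F \<alpha> M \<beta> P" and "projective E P"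
  obtains s r where "biprod E F P M \<alpha> s r \<beta>"
proof -
  have "\<theta> = ezero E P F" using ext_projective_eq_zero assms realizes_mem by blast
  then show ?thesis using split_realizes_biprod that assms(1) by blast
qed

lemma projective_iso:
  assumes P: "projective E P" and f: "f \<in> hom E P Q" "is_iso E f"
  shows "projective E Q"
  unfolding projective_def
proof (intro conjI allI impI)
  show "Q \<in> obj E" using hom_objs f by auto
  obtain f' where f': "f' \<in> hom E Q P" "cmp E f f' = idm E Q" using iso_inverse f by blast
  fix d A x B y C c
  assume T: "realizes E d A x B y C" and c: "c \<in> hom E Q C"
  obtain b where b: "b \<in> hom E P B" "cmp E y b = cmp E c f"
    using P T cmp_hom[OF f(1) c] unfolding projective_def by blast
  have y: "y \<in> hom E B C" using realizes_mem T by auto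
  have "cmp E y (cmp E b f') = c"
    using cmp_assoc[OF f'(1) b(1) y] b cmp_assoc[OF f'(1) f(1) c] f' cmp_id_right c by simp
  then show "\<exists>b\<in>hom E Q B. cmp E y b = c" using cmp_hom f'(1) b(1) by blast
qed

lemma projective_biprod:
  assumes bp: "biprod E X1 X2 S i1 i2 p1 p2" and P1: "projective E X1" and P2: "projective E X2"
  shows "projective E S"
  unfolding projective_def
proof (intro conjI allI impI)
  have h: "S \<in> obj E" "i1 \<in> hom E X1 S" "i2 \<in> hom E X2 S" "p1 \<in> hom E S X1" "p2 \<in> hom E S X2"
    "madd E (cmp E i1 p1) (cmp E i2 p2) = idm E S" using bp unfolding biprod_def by auto
  then show "S \<in> obj E" by simp
  fix d A x B y C c
  assume T: "realizes E d A x B y C" and c: "c \<in> hom E S C"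
  have y: "y \<in> hom E B C" using realizes_mem T by auto
  obtain b1 where b1: "b1 \<in> hom E X1 B" "cmp E y b1 = cmp E c i1"
    using P1 T cmp_hom[OF h(2) c] unfolding projective_def by blast
  obtain b2 where b2: "b2 \<in> hom E X2 B" "cmp E y b2 = cmp E c i2"
    using P2 T cmp_hom[OF h(3) c] unfolding projective_def by blast
  have bp1: "cmp E b1 p1 \<in> hom E S B" and bp2: "cmp E b2 p2 \<in> hom E S B" using cmp_hom h b1 b2 by auto
  have "cmp E y (madd E (cmp E b1 p1) (cmp E b2 p2)) = madd E (cmp E c (cmp E i1 p1)) (cmp E c (cmp E i2 p2))"
    using cmp_madd_right[OF bp1 bp2 y] cmp_assoc[OF h(4) b1(1) y] cmp_assoc[OF h(5) b2(1) y] b1 b2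
      cmp_assoc[OF h(4) h(2) c] cmp_assoc[OF h(5) h(3) c] by simp
  also have "\<dots> = c" using cmp_madd_right[OF cmp_hom[OF h(4) h(2)] cmp_hom[OF h(5) h(3)] c] h(6) cmp_id_right c
    by simp
  finally show "\<exists>b\<in>hom E S B. cmp E y b = c" using madd_hom bp1 bp2 by blast
qed

lemma zero_obj_projective:
  assumes Z: "zero_obj E Z"
  shows "projective E Z"
  unfolding projective_def
proof (intro conjI allI impI)
  show "Z \<in> obj E" using Z zero_obj_mem by auto
  fix d A x B y C c
  assume T: "realizes E d A x B y C" and c: "c \<in> hom E Z C"
  have y: "y \<in> hom E B C" using realizes_mem T by auto
  have "cmp E y (mzero E Z B) = c" using cmp_mzero_right[OF y] zero_obj_hom_from[OF Z c] Z zero_obj_mem by simp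
  then show "\<exists>b\<in>hom E Z B. cmp E y b = c" using mzero_hom Z zero_obj_mem hom_objs y by blast
qed

lemma projective_extension:
  assumes "realizes E \<theta> F \<alpha> M \<beta> L" and "projective E F" and "projective E L"
  shows "projective E M"
proof -
  obtain s r where "biprod E F L M \<alpha> s r \<beta>" using realizes_projective_biprod assms(1,3) .
  then show ?thesis using projective_biprod assms(2,3) by blast
qed

lemma proj_res_Suc:
  "proj_res E C n \<Longrightarrow> proj_res E C (Suc n)"
proof (induction n arbitrary: C)
  case 0
  then have P: "projective E C" by (simp add: proj_res_0_iff)
  obtain Z where Z: "zero_obj E Z" using zero_obj_exists by blast
  show ?case
    using realizes_zero_id[OF projective_mem[OF P] Z] P zero_obj_projective[OF Z]
    unfolding proj_res_Suc_iff proj_res_0_iff by blast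
next
  case (Suc n)
  then obtain d K g P f where "realizes E d K g P f C" "projective E P" "proj_res E K n"
    using Suc.prems unfolding proj_res_Suc_iff by (elim exE conjE) blast
  then show ?case unfolding proj_res_Suc_iff[of E C "Suc n"] using Suc.IH by blast
qed

lemma proj_res_mono: "proj_res E C n \<Longrightarrow> n \<le> m \<Longrightarrow> proj_res E C m"
  by (induction m) (auto simp: le_Suc_eq intro: proj_res_Suc)

lemma proj_res_iso:
  assumes R: "proj_res E C n" and c: "c \<in> hom E C C'" "is_iso E c"
  shows "proj_res E C' n"
proof (cases n)
  case 0
  then show ?thesis using R projective_iso c by (simp add: proj_res_0_iff)
next
  case (Suc k)
  then obtain d K g P f where T: "realizes E d K g P f C" and "projective E P" "proj_res E K k"
    using R unfolding Suc proj_res_Suc_iff by (elim exE conjE) blast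
  moreover obtain d' where "realizes E d' K g P (cmp E c f) C'" using realizes_cmp_iso_left[OF T c] .
  ultimately have "\<exists>d K g P f. realizes E d K g P f C' \<and> projective E P \<and> proj_res E K k" by blast
  then show ?thesis by (simp only: Suc proj_res_Suc_iff)
qed

lemma pd_le_iff: "pd E C \<le> enat n \<longleftrightarrow> proj_res E C n"
proof (cases "\<exists>k. proj_res E C k")
  case True
  define m where "m = (LEAST k. proj_res E C k)"
  have pd: "pd E C = enat m" unfolding pd_def m_def using True by simp
  have "proj_res E C m" unfolding m_def using LeastI_ex[OF True] .
  moreover have "proj_res E C n \<Longrightarrow> m \<le> n" unfolding m_def by (rule Least_le)
  ultimately show ?thesis using pd proj_res_mono by auto
next
  case False
  then show ?thesis unfolding pd_def by auto
qed

lemma pd_le_of_iso: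
  assumes "c \<in> hom E C C'" and "is_iso E c"
  shows "pd E C' \<le> pd E C"
proof (cases "pd E C")
  case (enat n)
  then have "proj_res E C n" using pd_le_iff[of C n] by simp
  then have "proj_res E C' n" using proj_res_iso assms by blast
  then show ?thesis using enat pd_le_iff[of C' n] by simp
qed simp

lemma pd_iso_eq:
  assumes c: "c \<in> hom E C C'" "is_iso E c"
  shows "pd E C' = pd E C"
proof -
  obtain c' where "c' \<in> hom E C' C" "is_iso E c'" using iso_inverse c by blast
  then have "pd E C \<le> pd E C'" using pd_le_of_iso by blast
  then show ?thesis using pd_le_of_iso[OF c] by simp
qed

subsection \<open>Projective dimension along conflations\<close>

lemma proj_res_extension_by_projective:
  assumes T: "realizes E \<theta> F \<alpha> M \<beta> P" and P: "projective E P" and R: "proj_res E F r"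
  shows "proj_res E M r"
proof (cases r)
  case 0
  then show ?thesis using projective_extension[OF T] P R by (simp add: proj_res_0_iff)
next
  case (Suc k)
  obtain dF K i X p where TF: "realizes E dF K i X p F" and PX: "projective E X" and RK: "proj_res E K k"
    using R unfolding Suc proj_res_Suc_iff by (elim exE conjE) blast
  obtain s q where bpM: "biprod E F P M \<alpha> s q \<beta>" using realizes_projective_biprod[OF T P] .
  have hM: "\<alpha> \<in> hom E F M" "s \<in> hom E P M" "q \<in> hom E M F" "cmp E q \<alpha> = idm E F"
    "cmp E q s = mzero E P F" using bpM unfolding biprod_def by auto
  have dF: "dF \<in> ext E F K" using realizes_mem TF by auto
  have K: "K \<in> obj E" and X: "X \<in> obj E" and Po: "P \<in> obj E"
    using realizes_objs TF projective_mem P by auto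
  obtain Z where Z: "zero_obj E Z" using zero_obj_exists by blast
  have Zo: "Z \<in> obj E" using Z zero_obj_mem by auto
  obtain SB ib1 ib2 pb1 pb2 where bpX: "biprod E X P SB ib1 ib2 pb1 pb2" using biprod_exists X Po by blast
  \<comment> \<open>sum of the triangles K -> X -> F and Z -> P -> P, realizing q^* dF on M = F + P\<close>
  define e where "e = epull E q dF"
  have e: "e \<in> ext E M K" unfolding e_def using epull_ext hM dF by blast
  have e\<alpha>: "epull E \<alpha> e = dF"
    unfolding e_def using epull_cmp[OF hM(1) hM(3) dF, symmetric] hM(4) epull_id dF by simp
  have es: "epull E s e = ezero E P K"
    unfolding e_def using epull_cmp[OF hM(2) hM(3) dF, symmetric] hM(5) epull_mzero[OF dF Po] by simp
  have "epush E (idm E K) (epull E \<alpha> e) = dF" using e\<alpha> epush_id dF by simp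
  moreover have "epush E (mzero E K Z) (epull E s e) = ezero E P Z"
    using epush_mzero epull_ext[OF hM(2) e] Zo by blast
  moreover have "epush E (idm E K) (epull E s e) = ezero E P K" using es epush_id[OF ezero_ext[OF Po K]] by simp
  moreover have "epush E (mzero E K Z) (epull E \<alpha> e) = ezero E F Z"
    using epush_mzero epull_ext[OF hM(1) e] Zo by blast
  ultimately obtain x' y' where "realizes E e K x' SB y' M"
    using realizes_biprod_sum[OF TF realizes_zero_id[OF Po Z] biprod_zero[OF K Z] bpX bpM e] by blast
  then show ?thesis using projective_biprod[OF bpX PX P] RK unfolding Suc proj_res_Suc_iff by blast
qed

lemma ext_into_biprod:
  assumes bp: "biprod E A1 A2 S i1 i2 p1 p2" and \<delta>1: "\<delta>1 \<in> ext E C A1" and \<delta>2: "\<delta>2 \<in> ext E C A2"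
  obtains \<delta> where "\<delta> \<in> ext E C S" "epush E p1 \<delta> = \<delta>1" "epush E p2 \<delta> = \<delta>2"
proof -
  have h: "i1 \<in> hom E A1 S" "i2 \<in> hom E A2 S" "p1 \<in> hom E S A1" "p2 \<in> hom E S A2"
    "cmp E p1 i1 = idm E A1" "cmp E p2 i2 = idm E A2" "cmp E p2 i1 = mzero E A1 A2"
    "cmp E p1 i2 = mzero E A2 A1" using bp unfolding biprod_def by auto
  have A: "A1 \<in> obj E" "A2 \<in> obj E" using hom_objs h by auto
  define \<delta> where "\<delta> = eadd E (epush E i1 \<delta>1) (epush E i2 \<delta>2)"
  have e: "epush E i1 \<delta>1 \<in> ext E C S" "epush E i2 \<delta>2 \<in> ext E C S" using epush_ext h \<delta>1 \<delta>2 by auto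
  have "\<delta> \<in> ext E C S" unfolding \<delta>_def using eadd_ext e by blast
  moreover have "epush E p1 \<delta> = eadd E (epush E (cmp E p1 i1) \<delta>1) (epush E (cmp E p1 i2) \<delta>2)"
    unfolding \<delta>_def using epush_eadd[OF h(3) e] epush_cmp[OF h(1) h(3) \<delta>1] epush_cmp[OF h(2) h(3) \<delta>2]
    by simp
  then have "epush E p1 \<delta> = \<delta>1"
    using h epush_id \<delta>1 epush_mzero[OF \<delta>2 A(1)] eadd_zero_right by simp
  moreover have "epush E p2 \<delta> = eadd E (epush E (cmp E p2 i1) \<delta>1) (epush E (cmp E p2 i2) \<delta>2)"
    unfolding \<delta>_def using epush_eadd[OF h(4) e] epush_cmp[OF h(1) h(4) \<delta>1] epush_cmp[OF h(2) h(4) \<delta>2]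
    by simp
  then have "epush E p2 \<delta> = \<delta>2"
    using h epush_id \<delta>2 epush_mzero[OF \<delta>1 A(2)] eadd_zero_left by simp
  ultimately show ?thesis using that by blast
qed

lemma realizes_cone_of_biprod_summand:
  assumes bp: "biprod E A1 A2 S i1 i2 p1 p2" and T: "realizes E \<delta> S n N q C"
    and T1: "realizes E (epush E p1 \<delta>) A1 x1 B1 y1 C"
  obtains d m e where "realizes E d A2 m N e B1"
proof -
  obtain Eo h' dd e d'' where T2: "realizes E d'' A2 (cmp E n i2) N h' Eo"
    and T3: "realizes E (epush E p1 \<delta>) A1 dd Eo e C"
    using ET4_octahedron[OF realizes_split[OF biprod_swap[OF bp]] T] .
  obtain b where b: "b \<in> hom E B1 Eo" "is_iso E b" using realizes_same_ext_iff[OF T1] T3 by blast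
  obtain b' where "b' \<in> hom E Eo B1" "is_iso E b'" using iso_inverse b by blast
  then show ?thesis using realizes_cmp_iso_left[OF T2] that by blast
qed

text \<open>Realize (\<delta>1, \<delta>2) on A1 \<oplus> A2 and apply (ET4) to the two split projections.\<close>

lemma realizes_pullback:
  assumes T1: "realizes E \<delta>1 A1 x1 B1 y1 C" and T2: "realizes E \<delta>2 A2 x2 B2 y2 C"
  obtains M d1 m1 e1 d2 m2 e2 where "realizes E d1 A1 m1 M e1 B2" and "realizes E d2 A2 m2 M e2 B1"
proof -
  have \<delta>: "\<delta>1 \<in> ext E C A1" "\<delta>2 \<in> ext E C A2" using realizes_mem T1 T2 by auto
  obtain S i1 i2 p1 p2 where bp: "biprod E A1 A2 S i1 i2 p1 p2"
    using biprod_exists ext_objs \<delta> by blast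
  obtain \<delta> where \<delta>S: "\<delta> \<in> ext E C S" and p: "epush E p1 \<delta> = \<delta>1" "epush E p2 \<delta> = \<delta>2"
    using ext_into_biprod[OF bp \<delta>] .
  obtain M n q where T: "realizes E \<delta> S n M q C" using realizes_exists \<delta>S by blast
  obtain d2 m2 e2 where "realizes E d2 A2 m2 M e2 B1"
    using realizes_cone_of_biprod_summand[OF bp T] T1 p(1) by blast
  moreover obtain d1 m1 e1 where "realizes E d1 A1 m1 M e1 B2"
    using realizes_cone_of_biprod_summand[OF biprod_swap[OF bp] T] T2 p(2) by blast
  ultimately show ?thesis using that by blast
qed

text \<open>The closure hypothesis is proj_res_extension at level k, assumed here so that this lemma can
  serve in the induction that proves it.\<close>

lemma proj_res_cone_step:
  assumes T: "realizes E d L u M v N" and RL: "proj_res E L k" and RM: "proj_res E M (Suc k)"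
    and ext_closed: "\<And>\<theta> F \<alpha> W \<beta> L. realizes E \<theta> F \<alpha> W \<beta> L \<Longrightarrow> proj_res E F k \<Longrightarrow>
      proj_res E L k \<Longrightarrow> proj_res E W k"
  shows "proj_res E N (Suc k)"
proof -
  obtain dM K i X p where TM: "realizes E dM K i X p M" and PX: "projective E X" and RK: "proj_res E K k"
    using RM unfolding proj_res_Suc_iff by (elim exE conjE) blast
  obtain Eo h' dd e d'' where "realizes E d'' Eo h' X (cmp E v p) N"
    and "realizes E (epull E u dM) K e Eo dd L"
    using ET4op_octahedron[OF T TM] .
  then show ?thesis using ext_closed RK RL PX unfolding proj_res_Suc_iff by blast
qed

lemma proj_res_extension:
  "realizes E \<theta> F \<alpha> W \<beta> L \<Longrightarrow> proj_res E F r \<Longrightarrow> proj_res E L r \<Longrightarrow> proj_res E W r"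
proof (induction r arbitrary: \<theta> F \<alpha> W \<beta> L)
  case 0
  then show ?case using projective_extension by (simp add: proj_res_0_iff)
next
  case (Suc k)
  obtain dL K i X p where TL: "realizes E dL K i X p L" and PX: "projective E X" and RK: "proj_res E K k"
    using Suc.prems(3) unfolding proj_res_Suc_iff by (elim exE conjE) blast
  obtain M d1 m1 e1 d2 m2 e2 where TW: "realizes E d1 K m1 M e1 W" and TX: "realizes E d2 F m2 M e2 X"
    using realizes_pullback[OF TL Suc.prems(1)] .
  have RM: "proj_res E M (Suc k)" using proj_res_extension_by_projective[OF TX PX Suc.prems(2)] .
  show ?case by (rule proj_res_cone_step[OF TW RK RM]) (rule Suc.IH)
qed

lemma proj_res_cone:
  assumes T: "realizes E d L u M v N" and RL: "proj_res E L a" and RM: "proj_res E M b"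
    and ab: "Suc a \<le> b"
  shows "proj_res E N b"
proof -
  obtain k where b: "b = Suc k" and "a \<le> k" using ab by (cases b) auto
  have RL': "proj_res E L k" using proj_res_mono RL \<open>a \<le> k\<close> by blast
  show ?thesis unfolding b by (rule proj_res_cone_step[OF T RL' RM[unfolded b]]) (rule proj_res_extension)
qed

end

lemma additive_functor_obj: "additive_functor S T F \<Longrightarrow> X \<in> obj S \<Longrightarrow> fo F X \<in> obj T"
  unfolding additive_functor_def by blast

lemma additive_functor_hom: "additive_functor S T F \<Longrightarrow> f \<in> hom S X Y \<Longrightarrow> fm F f \<in> hom T (fo F X) (fo F Y)"
  unfolding additive_functor_def by blast

lemma additive_functor_id: "additive_functor S T F \<Longrightarrow> X \<in> obj S \<Longrightarrow> fm F (idm S X) = idm T (fo F X)"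
  unfolding additive_functor_def by blast

lemma additive_functor_cmp: "additive_functor S T F \<Longrightarrow> f \<in> hom S X Y \<Longrightarrow> g \<in> hom S Y Z \<Longrightarrow>
    fm F (cmp S g f) = cmp T (fm F g) (fm F f)"
  unfolding additive_functor_def by blast

lemma exact_functor_additive: "exact_functor S T F \<Longrightarrow> additive_functor S T F"
  unfolding exact_functor_def by blast

lemma exact_functor_compatible:
  assumes "exact_functor S T F" and "f \<in> hom S X Y" and "compatible S f"
  shows "compatible T (fm F f)"
proof -
  have "preserves_compatible S T F" using assms(1) unfolding exact_functor_def by blast
  then show ?thesis using assms(2,3) unfolding preserves_compatible_def by blast
qed

lemma exact_functor_realizes:
  assumes "exact_functor S T F" and "realizes S d A x B y C"
  obtains d' where "realizes T d' (fo F A) (fm F x) (fo F B) (fm F y) (fo F C)"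
proof -
  obtain \<eta> where "\<forall>d A x B y C. realizes S d A x B y C \<longrightarrow>
      realizes T (\<eta> d) (fo F A) (fm F x) (fo F B) (fm F y) (fo F C)"
    using assms(1) unfolding exact_functor_def by (elim conjE exE) blast
  then show ?thesis using assms(2) that by blast
qed

lemma right_exact_functor_additive: "right_exact_functor S T F \<Longrightarrow> additive_functor S T F"
  unfolding right_exact_functor_def by blast

lemma right_exact_functor_realizes:
  assumes "right_exact_functor S T F" and "realizes S d A f B g C"
  obtains A' x y e where "realizes T e A' x (fo F B) (fm F g) (fo F C)" and "y \<in> hom T (fo F A) A'"
    and "compatible T y" and "deflation T y" and "fm F f = cmp T x y"
  using assms unfolding right_exact_functor_def by (elim conjE) blast

lemma adjunction_unit_hom: "adjunction S T F G un cu \<Longrightarrow> X \<in> obj S \<Longrightarrow> un X \<in> hom S X (fo G (fo F X))"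
  unfolding adjunction_def by blast

lemma adjunction_counit_hom: "adjunction S T F G un cu \<Longrightarrow> Y \<in> obj T \<Longrightarrow> cu Y \<in> hom T (fo F (fo G Y)) Y"
  unfolding adjunction_def by blast

lemma adjunction_unit_natural: "adjunction S T F G un cu \<Longrightarrow> f \<in> hom S X X' \<Longrightarrow>
    cmp S (un X') f = cmp S (fm G (fm F f)) (un X)"
  unfolding adjunction_def by blast

lemma adjunction_counit_natural: "adjunction S T F G un cu \<Longrightarrow> g \<in> hom T Y Y' \<Longrightarrow>
    cmp T g (cu Y) = cmp T (cu Y') (fm F (fm G g))"
  unfolding adjunction_def by blast

lemma adjunction_counit_unit: "adjunction S T F G un cu \<Longrightarrow> X \<in> obj S \<Longrightarrow>
    cmp T (cu (fo F X)) (fm F (un X)) = idm T (fo F X)"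
  unfolding adjunction_def by blast

lemma adjunction_unit_counit: "adjunction S T F G un cu \<Longrightarrow> Y \<in> obj T \<Longrightarrow>
    cmp S (fm G (cu Y)) (un (fo G Y)) = idm S (fo G Y)"
  unfolding adjunction_def by blast

section \<open>Recollements\<close>

locale exact_functor_with_ff_left_adjoint =
  B: good_extriangulated B + C: good_extriangulated C
  for B :: "('ob,'mb,'eb,'k::field) extri" and C :: "('oc,'mc,'ec,'k) extri"
    and jsh :: "('oc,'mc,'ob,'mb) fctr" and jup :: "('ob,'mb,'oc,'mc) fctr"
    and un :: "'oc \<Rightarrow> 'mc" and cu :: "'ob \<Rightarrow> 'mb" +
  assumes jup_exact: "exact_functor B C jup"
    and jsh_right_exact: "right_exact_functor C B jsh"
    and adj: "adjunction C B jsh jup un cu"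
    and jsh_fully_faithful: "fully_faithful C B jsh"
begin

lemma jsh_additive: "additive_functor C B jsh"
  using jsh_right_exact by (rule right_exact_functor_additive)

lemma jup_additive: "additive_functor B C jup"
  using jup_exact by (rule exact_functor_additive)

lemma unit_iso:
  assumes X: "X \<in> obj C"
  shows "is_iso C (un X)"
proof -
  have jX: "fo jsh X \<in> obj B" using additive_functor_obj[OF jsh_additive X] .
  define Y where "Y = fo jup (fo jsh X)"
  have Y: "Y \<in> obj C" unfolding Y_def using additive_functor_obj[OF jup_additive jX] .
  have u: "un X \<in> hom C X Y" unfolding Y_def using adjunction_unit_hom[OF adj X] .
  have "bij_betw (fm jsh) (hom C Y X) (hom B (fo jsh Y) (fo jsh X))"
    using jsh_fully_faithful Y X unfolding fully_faithful_def by blast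
  then have "cu (fo jsh X) \<in> fm jsh ` hom C Y X"
    using adjunction_counit_hom[OF adj jX] unfolding Y_def bij_betw_def by simp
  then obtain r where r: "r \<in> hom C Y X" "fm jsh r = cu (fo jsh X)" by (elim imageE) simp
  have inj: "inj_on (fm jsh) (hom C X X)"
    using jsh_fully_faithful X unfolding fully_faithful_def bij_betw_def by blast
  have "fm jsh (cmp C r (un X)) = cmp B (cu (fo jsh X)) (fm jsh (un X))"
    using additive_functor_cmp[OF jsh_additive u r(1)] r by simp
  also have "\<dots> = fm jsh (idm C X)"
    using adjunction_counit_unit[OF adj X] additive_functor_id[OF jsh_additive X] by simp
  finally have "cmp C r (un X) = idm C X"
    using inj_onD[OF inj _ C.cmp_hom[OF u r(1)] C.id_hom[OF X]] by blast
  moreover have "cmp C (un X) r = idm C Y"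
    using adjunction_unit_natural[OF adj r(1)] r adjunction_unit_counit[OF adj jX] unfolding Y_def by simp
  ultimately show ?thesis using C.is_isoI[OF u r(1)] by blast
qed

lemma jsh_projective:
  assumes P: "projective C P"
  shows "projective B (fo jsh P)"
  unfolding projective_def
proof (intro conjI allI impI)
  have Po: "P \<in> obj C" using C.projective_mem[OF P] .
  show jP: "fo jsh P \<in> obj B" using additive_functor_obj[OF jsh_additive Po] .
  fix d A x M y N c
  assume T: "realizes B d A x M y N" and c: "c \<in> hom B (fo jsh P) N"
  have y: "y \<in> hom B M N" using B.realizes_mem T by auto
  have M: "M \<in> obj B" and N: "N \<in> obj B" using B.hom_objs y by auto
  obtain d' where T': "realizes C d' (fo jup A) (fm jup x) (fo jup M) (fm jup y) (fo jup N)"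
    using exact_functor_realizes[OF jup_exact T] .
  have uP: "un P \<in> hom C P (fo jup (fo jsh P))" using adjunction_unit_hom[OF adj Po] .
  have jc: "fm jup c \<in> hom C (fo jup (fo jsh P)) (fo jup N)" using additive_functor_hom[OF jup_additive c] .
  \<comment> \<open>lift the adjoint transpose of c through j^* y, then transpose back\<close>
  obtain b' where b': "b' \<in> hom C P (fo jup M)" "cmp C (fm jup y) b' = cmp C (fm jup c) (un P)"
    using P T' C.cmp_hom[OF uP jc] unfolding projective_def by blast
  define b where "b = cmp B (cu M) (fm jsh b')"
  have cuM: "cu M \<in> hom B (fo jsh (fo jup M)) M" using adjunction_counit_hom[OF adj M] .
  have cuN: "cu N \<in> hom B (fo jsh (fo jup N)) N" using adjunction_counit_hom[OF adj N] .
  have cuP: "cu (fo jsh P) \<in> hom B (fo jsh (fo jup (fo jsh P))) (fo jsh P)"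
    using adjunction_counit_hom[OF adj jP] .
  have jb': "fm jsh b' \<in> hom B (fo jsh P) (fo jsh (fo jup M))" using additive_functor_hom[OF jsh_additive b'(1)] .
  have jy: "fm jup y \<in> hom C (fo jup M) (fo jup N)" using additive_functor_hom[OF jup_additive y] .
  have jjy: "fm jsh (fm jup y) \<in> hom B (fo jsh (fo jup M)) (fo jsh (fo jup N))"
    using additive_functor_hom[OF jsh_additive jy] .
  have jjc: "fm jsh (fm jup c) \<in> hom B (fo jsh (fo jup (fo jsh P))) (fo jsh (fo jup N))"
    using additive_functor_hom[OF jsh_additive jc] .
  have juP: "fm jsh (un P) \<in> hom B (fo jsh P) (fo jsh (fo jup (fo jsh P)))"
    using additive_functor_hom[OF jsh_additive uP] .
  have "cmp B y b = cmp B (cu N) (cmp B (fm jsh (fm jup y)) (fm jsh b'))"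
    unfolding b_def using B.cmp_assoc[OF jb' cuM y] adjunction_counit_natural[OF adj y]
      B.cmp_assoc[OF jb' jjy cuN] by simp
  also have "\<dots> = cmp B (cu N) (cmp B (fm jsh (fm jup c)) (fm jsh (un P)))"
    using additive_functor_cmp[OF jsh_additive b'(1) jy] b'(2) additive_functor_cmp[OF jsh_additive uP jc]
    by simp
  also have "\<dots> = cmp B (cmp B c (cu (fo jsh P))) (fm jsh (un P))"
    using adjunction_counit_natural[OF adj c] B.cmp_assoc[OF juP jjc cuN] by simp
  also have "\<dots> = c"
    using B.cmp_assoc[OF juP cuP c] adjunction_counit_unit[OF adj Po] B.cmp_id_right c by simp
  finally show "\<exists>b\<in>hom B (fo jsh P) M. cmp B y b = c" using B.cmp_hom[OF jb' cuM] unfolding b_def by blast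
qed

lemma jup_jsh_inflation:
  assumes g: "g \<in> hom C X Y" "inflation C g"
  shows "inflation C (fm jup (fm jsh g))"
proof -
  have X: "X \<in> obj C" and Y: "Y \<in> obj C" using C.hom_objs g by auto
  have uX: "un X \<in> hom C X (fo jup (fo jsh X))" and uY: "un Y \<in> hom C Y (fo jup (fo jsh Y))"
    using adjunction_unit_hom[OF adj] X Y by auto
  obtain v where v: "v \<in> hom C (fo jup (fo jsh X)) X" "is_iso C v"
    "cmp C (un X) v = idm C (fo jup (fo jsh X))"
    using C.iso_inverse[OF uX unit_iso[OF X]] by blast
  have jjg: "fm jup (fm jsh g) \<in> hom C (fo jup (fo jsh X)) (fo jup (fo jsh Y))"
    using additive_functor_hom[OF jup_additive additive_functor_hom[OF jsh_additive g(1)]] .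
  have "cmp C (cmp C (un Y) g) v = cmp C (fm jup (fm jsh g)) (cmp C (un X) v)"
    using adjunction_unit_natural[OF adj g(1)] C.cmp_assoc[OF v(1) uX jjg] by simp
  also have "\<dots> = fm jup (fm jsh g)" using v(3) C.cmp_id_right[OF jjg] by simp
  finally have eq: "cmp C (cmp C (un Y) g) v = fm jup (fm jsh g)" .
  have "inflation C (cmp C (un Y) g)" using C.inflation_cmp_iso_left[OF g(2,1) uY unit_iso[OF Y]] .
  then show ?thesis using C.inflation_cmp_iso_right[OF _ C.cmp_hom[OF g(1) uY] v(1,2)] eq by simp
qed

lemma jup_cocone_zero:
  assumes g: "g \<in> hom C X Y" "inflation C g" and x: "x \<in> hom B A' (fo jsh Y)"
    and y: "compatible B y" and gxy: "fm jsh g = cmp B x y"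
    and TL: "realizes B dL L u (fo jsh X) y A'"
  shows "zero_obj C (fo jup L)"
proof -
  have y_hom: "y \<in> hom B (fo jsh X) A'" using B.realizes_mem TL by auto
  obtain d where TJ: "realizes C d (fo jup L) (fm jup u) (fo jup (fo jsh X)) (fm jup y) (fo jup A')"
    using exact_functor_realizes[OF jup_exact TL] .
  have "inflation C (cmp C (fm jup x) (fm jup y))"
    using jup_jsh_inflation[OF g] gxy additive_functor_cmp[OF jup_additive y_hom x] by simp
  then have "inflation C (fm jup y)"
    using C.WIC_inflation additive_functor_hom[OF jup_additive] y_hom x by blast
  moreover have "deflation C (fm jup y)" using TJ unfolding deflation_def by blast
  moreover have "compatible C (fm jup y)" using exact_functor_compatible[OF jup_exact y_hom y] .
  ultimately have "is_iso C (fm jup y)" unfolding compatible_def by blast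
  then show ?thesis using C.zero_obj_cocone_of_iso[OF TJ] by blast
qed

lemma proj_res_jsh_step:
  assumes ker: "\<And>L. L \<in> obj B \<Longrightarrow> zero_obj C (fo jup L) \<Longrightarrow> proj_res B L m"
    and T: "realizes C d X g P f Y" and P: "projective C P"
    and RX: "proj_res B (fo jsh X) q" and mq: "Suc m \<le> q"
  shows "proj_res B (fo jsh Y) (Suc q)"
proof -
  obtain A' x y e where TA: "realizes B e A' x (fo jsh P) (fm jsh f) (fo jsh Y)"
    and y: "y \<in> hom B (fo jsh X) A'" "compatible B y" "deflation B y" and gxy: "fm jsh g = cmp B x y"
    using right_exact_functor_realizes[OF jsh_right_exact T] .
  obtain dL L u M N where TL: "realizes B dL L u M y N" using y(3) unfolding deflation_def by blast
  then have "M = fo jsh X" "N = A'" using B.realizes_mem B.hom_unique y(1) by blast+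
  then have TL: "realizes B dL L u (fo jsh X) y A'" using TL by simp
  have g: "g \<in> hom C X P" "inflation C g" using C.realizes_mem T unfolding inflation_def by blast+
  have "zero_obj C (fo jup L)"
    using jup_cocone_zero[OF g _ y(2) gxy TL] B.realizes_mem TA by blast
  then have "proj_res B L m" using ker B.realizes_objs TL by blast
  then have "proj_res B A' q" using B.proj_res_cone[OF TL _ RX mq] by blast
  then show ?thesis
    using TA jsh_projective[OF P] unfolding proj_res_Suc_iff by blast
qed

lemma proj_res_jsh:
  assumes ker: "\<And>L. L \<in> obj B \<Longrightarrow> zero_obj C (fo jup L) \<Longrightarrow> proj_res B L m"
  shows "proj_res C X n \<Longrightarrow> proj_res B (fo jsh X) (Suc m + n)"
proof (induction n arbitrary: X)
  case 0
  then have "proj_res B (fo jsh X) 0" using jsh_projective by (simp add: proj_res_0_iff)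
  then show ?case using B.proj_res_mono by blast
next
  case (Suc n)
  obtain d K g P f where T: "realizes C d K g P f X" and P: "projective C P" and RK: "proj_res C K n"
    using Suc.prems unfolding proj_res_Suc_iff by (elim exE conjE) blast
  show ?case using proj_res_jsh_step[OF ker T P Suc.IH[OF RK]] by simp
qed

lemma pd_jsh_le:
  assumes ker: "\<And>L. L \<in> obj B \<Longrightarrow> zero_obj C (fo jup L) \<Longrightarrow> pd B L \<le> g"
  shows "pd B (fo jsh X) \<le> pd C X + g + 1"
proof (cases "pd C X"; cases g)
  fix n m
  assume n: "pd C X = enat n" and m: "g = enat m"
  have "proj_res C X n" using C.pd_le_iff[of X n] n by simp
  moreover have "\<And>L. L \<in> obj B \<Longrightarrow> zero_obj C (fo jup L) \<Longrightarrow> proj_res B L m"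
    using ker B.pd_le_iff m by blast
  ultimately have "pd B (fo jsh X) \<le> enat (Suc m + n)" using proj_res_jsh B.pd_le_iff by blast
  then show ?thesis using n m by (simp add: one_enat_def add.commute)
qed simp_all

end

lemma recollement_kernel_pd_le:
  assumes B: "good_extri B" and R: "recollement A B C iup ilow ish jsh jup jlow"
    and Y: "Y \<in> obj B" "zero_obj C (fo jup Y)"
  shows "pd B Y \<le> gl_rel A B ilow"
proof -
  obtain X where X: "X \<in> obj A" "isomorphic B Y (fo ilow X)"
    using R Y unfolding recollement_def by (elim conjE exE) blast
  then obtain \<phi> where "\<phi> \<in> hom B Y (fo ilow X)" "is_iso B \<phi>" unfolding isomorphic_def by blast
  then have "pd B (fo ilow X) = pd B Y"
    by (rule good_extriangulated.pd_iso_eq[OF good_extriangulated.intro[OF B]])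
  then have "pd B Y = pd B (fo ilow X)" by simp
  also have "\<dots> \<le> gl_rel A B ilow" unfolding gl_rel_def using X(1) by (rule SUP_upper)
  finally show ?thesis .
qed

lemma recollement_exact_functor_with_ff_left_adjoint:
  assumes "good_extri B" and "good_extri C" and R: "recollement A B C iup ilow ish jsh jup jlow"
  obtains un cu where "exact_functor_with_ff_left_adjoint B C jsh jup un cu"
proof -
  obtain un cu where "adjunction C B jsh jup un cu"
    using R unfolding recollement_def by (elim conjE exE) blast
  moreover have "exact_functor B C jup" "right_exact_functor C B jsh" "fully_faithful C B jsh"
    using R unfolding recollement_def by blast+
  ultimately show ?thesis
    using that assms(1,2)
    unfolding exact_functor_with_ff_left_adjoint_def exact_functor_with_ff_left_adjoint_axioms_def
      good_extriangulated_def by blast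
qed

theorem mainTheorem2:
  fixes A :: "('oa,'ma,'ea,'k::field) extri"
    and B :: "('ob,'mb,'eb,'k) extri"
    and C :: "('oc,'mc,'ec,'k) extri"
    and iup :: "('ob,'mb,'oa,'ma) fctr" and ilow :: "('oa,'ma,'ob,'mb) fctr"
    and ish :: "('ob,'mb,'oa,'ma) fctr"
    and jsh :: "('oc,'mc,'ob,'mb) fctr" and jup :: "('ob,'mb,'oc,'mc) fctr"
    and jlow :: "('oc,'mc,'ob,'mb) fctr"
  assumes "good_extri A" and "good_extri B" and "good_extri C"
    and "recollement A B C iup ilow ish jsh jup jlow"
    and "X \<in> obj C"
  shows "pd B (fo jsh X) \<le> pd C X + gl_rel A B ilow + 1"
proof -
  obtain un cu where "exact_functor_with_ff_left_adjoint B C jsh jup un cu"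
    using recollement_exact_functor_with_ff_left_adjoint assms(2-4) by blast
  then show ?thesis
    by (rule exact_functor_with_ff_left_adjoint.pd_jsh_le) (rule recollement_kernel_pd_le[OF assms(2,4)])
qed

end
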